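(* Let $\gamma:S^n\to\mathbb{R}_+$ be continuous, and let $\widetilde W_\gamma=\alpha_N^{-1}\circ Id(\mathcal W_\gamma)\subset S^{n+1}$ be the spherical Wulff shape. Suppose $\widetilde W_\gamma$ is of constant width. Then (1) $\Delta(\widetilde W_\gamma)+\mathrm{diam}(\widetilde W_\gamma^\circ)=\pi$; (2) $\Delta(\widetilde W_\gamma)+\Delta(\widetilde W_\gamma^\circ)=\pi$; (3) $\mathrm{diam}(\widetilde W_\gamma)+\Delta(\widetilde W_\gamma^\circ)=\pi$; (4) $\mathrm{diam}(\widetilde W_\gamma)+\mathrm{diam}(\widetilde W_\gamma^\circ)=\pi$.
   Context: Wulff shapes. For a continuous $\gamma:S^n\to\mathbb{R}_+$ (where $\mathbb{R}_+$ denotes the positive reals), the Wulff shape is $\mathcal W_\gamma=\bigcap_{\theta\in S^n}\{x\in\mathbb{R}^{n+1}:x\cdot\theta\le\gamma(\theta)\}$. It is a convex body in $\mathbb{R}^{n+1}$ containing the origin in its interior. The maps. Let $Id:\mathbb{R}^{n+1}\to\mathbb{R}^{n+1}\times\{1\}$, $Id(x)=(x,1)$. Let $N=(0,\dots,0,1)\in S^{n+1}\subset\mathbb{R}^{n+2}$, and let $S^{n+1}_{N,+}=\{Q\in S^{n+1}:Q_{n+2}>0\}$. Let $\alpha_N:S^{n+1}_{N,+}\to\mathbb{R}^{n+1}\times\{1\}$ be the central projection $\alpha_N(P_1,\dots,P_{n+2})=(P_1/P_{n+2},\dots,P_{n+1}/P_{n+2},1)$. Spherical notions on $S^{n+1}$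 (with origin $O$). The spherical distance is $|PQ|=\arccos(\overrightarrow{OP}\cdot\overrightarrow{OQ})$. The closed hemisphere centered at $P$ is $S^+_P=\{Q:\overrightarrow{OP}\cdot\overrightarrow{OQ}\ge0\}$. The spherical polar of a set $W$ is $W^\circ=\bigcap_{P\in W}S^+_P$. A hemisphere $S^+_Q$ supports a convex body $K$ at $P\in\partial K$ if $K\subseteq S^+_Q$ and $\overrightarrow{OQ}\cdot\overrightarrow{OP}=0$. For non-equal, non-opposite hemispheres, the lune $S^+_P\cap S^+_Q$ has thickness $\Delta(S^+_P\cap S^+_Q)=\pi-|PQ|$. Width and diameter. For a supporting hemisphere $S^+_P$ of $K$, $\mathrm{width}_{S^+_P}(K)=\min\{\Delta(S^+_P\cap S^+_Q):K\subset S^+_Q\}$. $K$ is of constant width if all these widths are equal; this common value is denoted $\Delta(K)$. $\mathrm{diam}(K)=\max\{|PQ|:P,Q\in K\}$. *)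

theory Defs
  imports "HOL-Analysis.Analysis"
begin

text \<open>R^{n+1} is modelled by a Euclidean space 'a, R^{n+2} by 'a \<times> real.
  S^n = sphere 0 1 in 'a, S^{n+1} = sphere 0 1 in 'a \<times> real, N = (0,1).\<close>

definition wulff :: "('a::euclidean_space \<Rightarrow> real) \<Rightarrow> 'a set" where
  "wulff \<gamma> = (\<Inter>\<theta>\<in>sphere 0 1. {x. x \<bullet> \<theta> \<le> \<gamma> \<theta>})"

definition Id_emb :: "'a::euclidean_space \<Rightarrow> 'a \<times> real" where
  "Id_emb x = (x, 1)"

definition northN :: "'a::euclidean_space \<times> real" where
  "northN = (0, 1)"

definition upper_hemi :: "('a::euclidean_space \<times> real) set" where
  "upper_hemi = {Q \<in> sphere 0 1. snd Q > 0}"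

definition alphaN :: "'a::euclidean_space \<times> real \<Rightarrow> 'a \<times> real" where
  "alphaN P = ((1 / snd P) *\<^sub>R fst P, 1)"

definition sph_wulff :: "('a::euclidean_space \<Rightarrow> real) \<Rightarrow> ('a \<times> real) set" where
  "sph_wulff \<gamma> = {P \<in> upper_hemi. alphaN P \<in> Id_emb ` wulff \<gamma>}"

definition sph_dist :: "'a::euclidean_space \<times> real \<Rightarrow> 'a \<times> real \<Rightarrow> real" where
  "sph_dist P Q = arccos (P \<bullet> Q)"

definition hemi :: "'a::euclidean_space \<times> real \<Rightarrow> ('a \<times> real) set" where
  "hemi P = {Q \<in> sphere 0 1. P \<bullet> Q \<ge> 0}"

definition sph_polar :: "('a::euclidean_space \<times> real) set \<Rightarrow> ('a \<times> real) set" where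
  "sph_polar W = sphere 0 1 \<inter> (\<Inter>P\<in>W. hemi P)"

definition sph_boundary :: "('a::euclidean_space \<times> real) set \<Rightarrow> ('a \<times> real) set" where
  "sph_boundary K = closure K \<inter> closure (sphere 0 1 - K)"

definition supports_at :: "'a::euclidean_space \<times> real \<Rightarrow> ('a \<times> real) set \<Rightarrow> 'a \<times> real \<Rightarrow> bool" where
  "supports_at Q K P \<longleftrightarrow> Q \<in> sphere 0 1 \<and> P \<in> sph_boundary K \<and> K \<subseteq> hemi Q \<and> Q \<bullet> P = 0"

definition supporting :: "'a::euclidean_space \<times> real \<Rightarrow> ('a \<times> real) set \<Rightarrow> bool" where
  "supporting Q K \<longleftrightarrow> (\<exists>P. supports_at Q K P)"

text \<open>Thickness of the lune S^+_P \<inter> S^+_Q (for non-equal, non-opposite hemispheres).\<close>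
definition lune_thickness :: "'a::euclidean_space \<times> real \<Rightarrow> 'a \<times> real \<Rightarrow> real" where
  "lune_thickness P Q = pi - sph_dist P Q"

definition width :: "'a::euclidean_space \<times> real \<Rightarrow> ('a \<times> real) set \<Rightarrow> real" where
  "width P K = (INF Q \<in> {Q \<in> sphere 0 1. Q \<noteq> P \<and> Q \<noteq> - P \<and> K \<subseteq> hemi Q}. lune_thickness P Q)"

definition constant_width :: "('a::euclidean_space \<times> real) set \<Rightarrow> bool" where
  "constant_width K \<longleftrightarrow> (\<exists>w. \<forall>P. supporting P K \<longrightarrow> width P K = w)"

text \<open>Delta(K): the common value of the widths (meaningful when K has constant width).\<close>
definition Delta :: "('a::euclidean_space \<times> real) set \<Rightarrow> real" where
  "Delta K = (SOME w. \<forall>P. supporting P K \<longrightarrow> width P K = w)"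

definition sph_diam :: "('a::euclidean_space \<times> real) set \<Rightarrow> real" where
  "sph_diam K = (SUP PQ \<in> K \<times> K. sph_dist (fst PQ) (snd PQ))"

end

theory Submission
  imports Defs
begin

text \<open>
  Write \<open>K\<close> for the spherical Wulff shape and \<open>L\<close> for its polar; \<open>K\<close> lies in the open
  hemisphere of the north pole \<open>N\<close>, contains a neighbourhood of \<open>N\<close>, and \<open>K\<close> and \<open>L\<close> are
  polar to each other. A hemisphere centred at \<open>P\<close> supports \<open>K\<close> exactly when \<open>P\<close> is a boundary
  point of \<open>L\<close>, and then its width is \<open>\<pi>\<close> minus the arccosine of the least value of
  \<open>P \<bullet> Q\<close> over \<open>Q \<in> L\<close>. Constant width therefore
  says that this minimum is a constant \<open>\<kappa>\<close> on \<open>\<partial>L\<close>, so \<open>\<Delta>(K) = \<pi> - arccos \<kappa>\<close>; since an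
  interior point of \<open>L\<close> can be rotated to decrease any inner product, \<open>\<kappa>\<close> is also the least
  inner product of two points of \<open>L\<close>, i.e. \<open>diam L = arccos \<kappa>\<close>.

  The core is the dual statement: two points of \<open>K\<close> have inner product at least \<open>-\<kappa>\<close>, with
  equality attained at every boundary point of \<open>K\<close>. Then \<open>diam K = arccos (-\<kappa>)\<close> and
  \<open>\<Delta>(L) = \<pi> - arccos (-\<kappa>)\<close>, and all four sums equal \<open>\<pi>\<close>. The lower bound is proved
  separately for \<open>\<kappa> < 0\<close> (an intermediate value argument along arcs from \<open>N\<close>), \<open>\<kappa> = 0\<close>
  (a point of \<open>K\<close> outside \<open>L\<close> would produce too many pairwise orthogonal unit vectors in
  \<open>L\<close>) and \<open>\<kappa> > 0\<close> (the point at distance \<open>diam L\<close> from a boundary point of \<open>L\<close> along the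
  inner normal of a supporting hemisphere lies in \<open>L\<close>).
\<close>

section \<open>Unit vectors and the spherical polar\<close>

lemma unit_inner_abs_le: "norm (x::'a::real_inner) = 1 \<Longrightarrow> norm y = 1 \<Longrightarrow> \<bar>x \<bullet> y\<bar> \<le> 1"
  using Cauchy_Schwarz_ineq2[of x y] by simp

lemma unit_inner_eq_1D: "norm (x::'a::real_inner) = 1 \<Longrightarrow> norm y = 1 \<Longrightarrow> x \<bullet> y = 1 \<Longrightarrow> x = y"
proof -
  assume a: "norm x = 1" "norm y = 1" "x \<bullet> y = 1"
  have "(norm (x - y))\<^sup>2 = 0"
    using a by (simp add: power2_norm_eq_inner inner_diff inner_commute norm_eq_1)
  then show "x = y" by simp
qed

lemma inner_normalize_left: "(v /\<^sub>R norm v) \<bullet> w = (v \<bullet> w) / norm v"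
  by (simp add: divide_inverse mult.commute)

lemma inner_normalize_right: "z \<bullet> (v /\<^sub>R norm v) = (z \<bullet> v) / norm v"
  by (simp add: divide_inverse mult.commute)

lemma dist_normalize_le:
  fixes v u :: "'a::real_normed_vector"
  assumes "norm u = 1" "v \<noteq> 0"
  shows "dist (v /\<^sub>R norm v) u \<le> 2 * norm (v - u)"
proof -
  have e: "v /\<^sub>R norm v - v = (1 / norm v - 1) *\<^sub>R v" by (simp add: scaleR_diff_left divide_inverse)
  have e2: "(1 / norm v - 1) * norm v = 1 - norm v" using assms(2) by (simp add: field_simps)
  have "norm (v /\<^sub>R norm v - v) = \<bar>1 / norm v - 1\<bar> * norm v" unfolding e by simp
  also have "\<dots> = \<bar>1 - norm v\<bar>" using e2 by (metis abs_mult abs_norm_cancel)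
  also have "\<dots> \<le> norm (v - u)" using norm_triangle_ineq3[of u v] assms(1)
    by (simp add: abs_minus_commute norm_minus_commute)
  finally have "norm (v /\<^sub>R norm v - v) \<le> norm (v - u)" .
  then show ?thesis
    using norm_triangle_ineq[of "v /\<^sub>R norm v - v" "v - u"] by (simp add: dist_norm)
qed

lemma sqrt_one_plus_le: "0 \<le> (u::real) \<Longrightarrow> sqrt (1 + u) \<le> 1 + u / 2"
  by (rule real_le_lsqrt) (auto simp: power2_eq_square algebra_simps)

lemma tilt_ratio_lt:
  fixes c t d :: real
  assumes c: "\<bar>c\<bar> < 1" and t: "0 < t" "t \<le> 1/2" and d: "1 \<le> d" "d \<le> 1 + t\<^sup>2 * (1 - c\<^sup>2) / 2"
  shows "(c - t * (1 - c\<^sup>2)) / d < c"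
proof -
  have s: "0 < 1 - c\<^sup>2" using c abs_square_less_1[of c] by simp
  have "c - t * (1 - c\<^sup>2) < c * d"
  proof (cases "0 \<le> c")
    case True
    then have "c \<le> c * d" using d(1) by (simp add: mult_le_cancel_left1)
    moreover have "0 < t * (1 - c\<^sup>2)" using s t by simp
    ultimately show ?thesis by linarith
  next
    case False
    have cd: "c * (1 + t\<^sup>2 * (1 - c\<^sup>2) / 2) \<le> c * d" using False d(2) by (intro mult_left_mono_neg) auto
    have "(-1) * t \<le> c * t" using c t by (intro mult_right_mono) auto
    then have "0 < 1 + c * t / 2" using t by linarith
    then have "0 < t * (1 - c\<^sup>2) * (1 + c * t / 2)" using s t by simp
    then show ?thesis using cd by (simp add: algebra_simps power2_eq_square)
  qed
  then show ?thesis using d(1) by (simp add: divide_less_eq)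
qed

text \<open>Rotating \<open>P\<close> slightly away from \<open>Q\<close> in their common plane decreases \<open>P \<bullet> Q\<close>.\<close>

lemma tilt_inner_lt:
  fixes P Q :: "'a::real_inner"
  assumes nP: "norm P = 1" and nQ: "norm Q = 1" and "Q \<noteq> P" "Q \<noteq> - P" and t: "0 < t" "t \<le> 1/2"
  shows "((P + t *\<^sub>R ((P \<bullet> Q) *\<^sub>R P - Q)) /\<^sub>R norm (P + t *\<^sub>R ((P \<bullet> Q) *\<^sub>R P - Q))) \<bullet> Q < P \<bullet> Q"
proof -
  define c where "c = P \<bullet> Q"
  define v where "v = P + t *\<^sub>R (c *\<^sub>R P - Q)"
  have "c \<noteq> 1" using unit_inner_eq_1D[OF nP nQ] assms(3) by (auto simp: c_def)
  moreover have "c \<noteq> -1" using unit_inner_eq_1D[of "-P" Q] nP nQ assms(4) by (auto simp: c_def)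
  ultimately have c: "\<bar>c\<bar> < 1" using unit_inner_abs_le[OF nP nQ] by (auto simp: c_def)
  have s: "0 \<le> 1 - c\<^sup>2" using c abs_square_less_1[of c] by simp
  have "v \<bullet> v = 1 + t\<^sup>2 * (1 - c\<^sup>2)"
    using nP nQ by (simp add: v_def c_def inner_add_left inner_add_right inner_diff_left inner_diff_right
        inner_commute norm_eq_1 power2_eq_square algebra_simps)
  then have nv: "norm v = sqrt (1 + t\<^sup>2 * (1 - c\<^sup>2))" by (simp add: norm_eq_sqrt_inner)
  have "v \<bullet> Q = c - t * (1 - c\<^sup>2)"
    using nQ by (simp add: v_def c_def inner_add_left inner_diff_left norm_eq_1 power2_eq_square algebra_simps)
  then have "(v /\<^sub>R norm v) \<bullet> Q = (c - t * (1 - c\<^sup>2)) / norm v" by (simp only: inner_normalize_left)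
  also have "\<dots> < c"
    using tilt_ratio_lt[OF c t] nv s sqrt_one_plus_le[of "t\<^sup>2 * (1 - c\<^sup>2)"] by simp
  finally show ?thesis by (simp add: v_def c_def)
qed

definition spolar :: "'a::euclidean_space set \<Rightarrow> 'a set" where
  "spolar B = {Z \<in> sphere 0 1. \<forall>b\<in>B. 0 \<le> b \<bullet> Z}"

lemma normalize_in_spolar:
  fixes v :: "'a::euclidean_space"
  assumes "v \<noteq> 0" "\<forall>b\<in>B. 0 \<le> b \<bullet> v"
  shows "v /\<^sub>R norm v \<in> spolar B"
  using assms by (auto simp: spolar_def inner_commute)

lemma spolar_subset_sphere: "spolar B \<subseteq> sphere 0 1"
  by (auto simp: spolar_def)

lemma compact_spolar: "compact (spolar (B::'a::euclidean_space set))"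
proof -
  have "spolar B = sphere 0 1 \<inter> (\<Inter>b\<in>B. {Z. 0 \<le> b \<bullet> Z})"
    by (auto simp: spolar_def)
  moreover have "closed (\<Inter>b\<in>B. {Z::'a. 0 \<le> b \<bullet> Z})"
    by (intro closed_INT ballI closed_Collect_le continuous_intros)
  ultimately show ?thesis by (simp add: compact_Int_closed)
qed

definition min_inner :: "'a::euclidean_space set \<Rightarrow> 'a \<Rightarrow> real" where
  "min_inner B X = (INF Z\<in>B. X \<bullet> Z)"

lemma min_inner_le:
  fixes B :: "'a::euclidean_space set"
  assumes "compact B" "Z \<in> B"
  shows "min_inner B X \<le> X \<bullet> Z"
proof -
  have "bounded ((\<lambda>Z. X \<bullet> Z) ` B)"
    using assms(1) by (intro compact_imp_bounded compact_continuous_image continuous_intros)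
  then show ?thesis
    unfolding min_inner_def using assms(2) by (intro cInf_lower bounded_imp_bdd_below) auto
qed

lemma min_inner_attained:
  fixes B :: "'a::euclidean_space set"
  assumes "compact B" "B \<noteq> {}"
  obtains Y where "Y \<in> B" "min_inner B X = X \<bullet> Y"
proof -
  have "continuous_on B (\<lambda>Z. X \<bullet> Z)" by (intro continuous_intros)
  then obtain Y where Y: "Y \<in> B" "\<forall>Z\<in>B. X \<bullet> Y \<le> X \<bullet> Z"
    using continuous_attains_inf[OF assms] by blast
  have "min_inner B X = X \<bullet> Y"
    unfolding min_inner_def by (rule cInf_eq_minimum) (use Y in auto)
  then show ?thesis using that Y by blast
qed

lemma min_inner_abs_le_1:
  fixes B :: "'a::euclidean_space set"
  assumes "compact B" "B \<noteq> {}" "B \<subseteq> sphere 0 1" "norm P = 1"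
  shows "\<bar>min_inner B P\<bar> \<le> 1"
proof -
  obtain Q where "Q \<in> B" "min_inner B P = P \<bullet> Q" using min_inner_attained[OF assms(1,2)] by blast
  then show ?thesis using unit_inner_abs_le[OF assms(4), of Q] assms(3) by auto
qed

definition min_mutual_inner :: "'a::euclidean_space set \<Rightarrow> real" where
  "min_mutual_inner B = (INF p\<in>B \<times> B. fst p \<bullet> snd p)"

lemma min_mutual_inner_le:
  fixes B :: "'a::euclidean_space set"
  assumes "compact B" "P \<in> B" "Q \<in> B"
  shows "min_mutual_inner B \<le> P \<bullet> Q"
proof -
  have "continuous_on (B \<times> B) (\<lambda>p. fst p \<bullet> snd p)" by (intro continuous_intros)
  then have "bounded ((\<lambda>p. fst p \<bullet> snd p) ` (B \<times> B))"
    using assms(1) compact_Times compact_continuous_image compact_imp_bounded by blast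
  moreover have "P \<bullet> Q \<in> (\<lambda>p. fst p \<bullet> snd p) ` (B \<times> B)"
    using assms(2,3) by (intro image_eqI[of _ _ "(P, Q)"]) auto
  ultimately show ?thesis
    unfolding min_mutual_inner_def by (intro cInf_lower bounded_imp_bdd_below)
qed

lemma min_mutual_inner_attained:
  fixes B :: "'a::euclidean_space set"
  assumes "compact B" "B \<noteq> {}"
  obtains P Q where "P \<in> B" "Q \<in> B" "min_mutual_inner B = P \<bullet> Q"
proof -
  have "continuous_on (B \<times> B) (\<lambda>p. fst p \<bullet> snd p)" by (intro continuous_intros)
  moreover have "compact (B \<times> B)" "B \<times> B \<noteq> {}" using assms by (auto simp: compact_Times)
  ultimately obtain p where p: "p \<in> B \<times> B" "\<forall>q\<in>B \<times> B. fst p \<bullet> snd p \<le> fst q \<bullet> snd q"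
    using continuous_attains_inf[of "B \<times> B" "\<lambda>p. fst p \<bullet> snd p"] by blast
  have "min_mutual_inner B = fst p \<bullet> snd p"
    unfolding min_mutual_inner_def by (rule cInf_eq_minimum) (use p in auto)
  then show ?thesis using that p by (auto simp: mem_Times_iff)
qed

lemma continuous_on_min_inner:
  fixes B :: "'a::euclidean_space set"
  assumes "compact B" "B \<noteq> {}" "B \<subseteq> sphere 0 1"
  shows "continuous_on U (min_inner B)"
proof (rule lipschitz_on_continuous_on)
  have le: "min_inner B X \<le> min_inner B X' + norm (X - X')" for X X'
  proof -
    obtain Y where Y: "Y \<in> B" "min_inner B X' = X' \<bullet> Y"
      using min_inner_attained[OF assms(1,2)] by blast
    have "min_inner B X \<le> X' \<bullet> Y + (X - X') \<bullet> Y"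
      using min_inner_le[OF assms(1) Y(1)] by (simp add: inner_diff_left)
    also have "(X - X') \<bullet> Y \<le> norm (X - X')"
      using norm_cauchy_schwarz[of "X - X'" Y] Y(1) assms(3) by auto
    finally show ?thesis using Y by simp
  qed
  have "\<bar>min_inner B X - min_inner B X'\<bar> \<le> norm (X - X')" for X X'
    using le[of X X'] le[of X' X] norm_minus_commute[of X X'] by linarith
  then show "1-lipschitz_on U (min_inner B)"
    by (simp add: lipschitz_on_def dist_norm)
qed

lemma orthonormal_pair_inner_sq_le:
  fixes X P Z :: "'a::real_inner"
  assumes "norm X = 1" "norm P = 1" "X \<bullet> P = 0" "norm Z = 1"
  shows "(X \<bullet> Z)\<^sup>2 + (P \<bullet> Z)\<^sup>2 \<le> 1"
proof -
  define a where "a = X \<bullet> Z"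
  define b where "b = P \<bullet> Z"
  have XX: "X \<bullet> X = 1" and PP: "P \<bullet> P = 1" and ZZ: "Z \<bullet> Z = 1"
    using assms by (simp_all add: norm_eq_1)
  have PX: "P \<bullet> X = 0" using assms(3) by (simp add: inner_commute)
  have ZX: "Z \<bullet> X = a" and ZP: "Z \<bullet> P = b" by (simp_all add: a_def b_def inner_commute)
  have "0 \<le> (Z - a *\<^sub>R X - b *\<^sub>R P) \<bullet> (Z - a *\<^sub>R X - b *\<^sub>R P)" by simp
  also have "\<dots> = 1 - a\<^sup>2 - b\<^sup>2"
    by (simp add: inner_diff_left inner_diff_right XX PP ZZ PX assms(3) ZX ZP a_def[symmetric] b_def[symmetric] power2_eq_square algebra_simps)
  finally show ?thesis by (simp add: a_def b_def)
qed

lemma mult_le_sqrt_one_minus_sq: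
  fixes \<sigma> x p :: real
  assumes "0 \<le> \<sigma>" "\<sigma> \<le> x" "x\<^sup>2 + p\<^sup>2 \<le> 1"
  shows "\<sigma> * p \<le> sqrt (1 - \<sigma>\<^sup>2) * x"
proof -
  have "\<sigma>\<^sup>2 \<le> x\<^sup>2" using assms by (intro power_mono) auto
  have "\<sigma>\<^sup>2 * p\<^sup>2 \<le> \<sigma>\<^sup>2 * (1 - x\<^sup>2)" using assms(3) by (intro mult_left_mono) auto
  also have "\<dots> \<le> (1 - \<sigma>\<^sup>2) * x\<^sup>2" using \<open>\<sigma>\<^sup>2 \<le> x\<^sup>2\<close> by (simp add: algebra_simps)
  finally have "\<sigma>\<^sup>2 * p\<^sup>2 \<le> (1 - \<sigma>\<^sup>2) * x\<^sup>2" .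
  moreover have nn: "0 \<le> 1 - \<sigma>\<^sup>2" using \<open>\<sigma>\<^sup>2 \<le> x\<^sup>2\<close> assms(3) zero_le_power2[of p] by linarith
  ultimately have "(\<sigma> * p)\<^sup>2 \<le> (sqrt (1 - \<sigma>\<^sup>2) * x)\<^sup>2" by (simp add: power_mult_distrib)
  moreover have "0 \<le> sqrt (1 - \<sigma>\<^sup>2) * x" using assms(1,2) nn by simp
  ultimately show ?thesis by (rule power2_le_imp_le)
qed

lemma tilted_in_spolar:
  fixes X P :: "'a::euclidean_space"
  assumes X: "norm X = 1" and P: "norm P = 1" and XP: "X \<bullet> P = 0"
    and \<sigma>: "0 \<le> \<sigma>" "\<sigma> \<le> 1" and U: "U \<subseteq> sphere 0 1"
    and h: "\<forall>Z\<in>U. \<sigma> \<le> X \<bullet> Z \<and> 0 \<le> P \<bullet> Z"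
  shows "(- \<sigma>) *\<^sub>R P + sqrt (1 - \<sigma>\<^sup>2) *\<^sub>R X \<in> spolar U"
proof -
  define s where "s = sqrt (1 - \<sigma>\<^sup>2)"
  have "\<sigma>\<^sup>2 \<le> 1" using \<sigma> by (simp add: power_le_one)
  then have ss: "s * s = 1 - \<sigma> * \<sigma>" by (simp add: s_def power2_eq_square)
  have XX: "X \<bullet> X = 1" and PP: "P \<bullet> P = 1" using X P by (simp_all add: norm_eq_1)
  have "norm ((- \<sigma>) *\<^sub>R P + s *\<^sub>R X) = 1"
    unfolding norm_eq_1 using XP
    by (simp add: inner_add_left inner_add_right inner_diff_left inner_diff_right XX PP inner_commute ss)
  moreover have "0 \<le> Z \<bullet> ((- \<sigma>) *\<^sub>R P + s *\<^sub>R X)" if Z: "Z \<in> U" for Z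
  proof -
    have "(X \<bullet> Z)\<^sup>2 + (P \<bullet> Z)\<^sup>2 \<le> 1" using orthonormal_pair_inner_sq_le[OF X P XP] Z U by auto
    then have "\<sigma> * (P \<bullet> Z) \<le> s * (X \<bullet> Z)"
      unfolding s_def using mult_le_sqrt_one_minus_sq \<sigma>(1) h Z by blast
    then show ?thesis by (simp add: inner_add_right inner_diff_right inner_commute[of Z])
  qed
  ultimately show ?thesis by (simp add: spolar_def s_def)
qed

lemma inner_residual_sq_le:
  fixes X Y Q :: "'a::real_inner"
  assumes X: "norm X = 1" and Y: "norm Y = 1" and Q: "norm Q = 1" and XY: "X \<bullet> Y = \<sigma>"
  shows "(Q \<bullet> X - \<sigma> * (Q \<bullet> Y))\<^sup>2 \<le> (1 - \<sigma>\<^sup>2) * (1 - (Q \<bullet> Y)\<^sup>2)"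
proof -
  define Q' where "Q' = Q - (Q \<bullet> Y) *\<^sub>R Y"
  define X' where "X' = X - \<sigma> *\<^sub>R Y"
  have XX: "X \<bullet> X = 1" and YY: "Y \<bullet> Y = 1" and QQ: "Q \<bullet> Q = 1"
    using X Y Q by (simp_all add: norm_eq_1)
  have YX: "Y \<bullet> X = \<sigma>" and YQ: "Y \<bullet> Q = Q \<bullet> Y" using XY by (simp_all add: inner_commute)
  have "Q' \<bullet> X' = Q \<bullet> X - \<sigma> * (Q \<bullet> Y)"
    by (simp add: Q'_def X'_def inner_diff_left inner_diff_right YX YY YQ algebra_simps)
  moreover have "Q' \<bullet> Q' = 1 - (Q \<bullet> Y)\<^sup>2"
    by (simp add: Q'_def inner_diff_left inner_diff_right QQ YY YQ power2_eq_square algebra_simps)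
  moreover have "X' \<bullet> X' = 1 - \<sigma>\<^sup>2"
    by (simp add: X'_def inner_diff_left inner_diff_right XX YY YX XY power2_eq_square algebra_simps)
  ultimately show ?thesis using Cauchy_Schwarz_ineq[of Q' X'] by (simp add: mult.commute)
qed

lemma inner_residual_lower_bound:
  fixes X Y Q :: "'a::real_inner"
  assumes X: "norm X = 1" and Y: "norm Y = 1" and Q: "norm Q = 1"
    and s: "X \<bullet> Y = \<sigma>" "0 \<le> \<sigma>" "\<sigma> < 1"
    and a: "0 \<le> Q \<bullet> X" and b: "0 \<le> Q \<bullet> Y"
  shows "- \<sigma> * sqrt (1 - \<sigma>\<^sup>2) \<le> Q \<bullet> X - \<sigma> * (Q \<bullet> Y)"
proof (rule ccontr)
  define s where "s = sqrt (1 - \<sigma>\<^sup>2)"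
  have s2: "s\<^sup>2 = 1 - \<sigma>\<^sup>2" "0 \<le> s" using s by (simp_all add: s_def power_le_one)
  have cs: "(Q \<bullet> X - \<sigma> * (Q \<bullet> Y))\<^sup>2 \<le> s\<^sup>2 * (1 - (Q \<bullet> Y)\<^sup>2)"
    using inner_residual_sq_le[OF X Y Q s(1)] s2(1) by simp
  assume "\<not> - \<sigma> * sqrt (1 - \<sigma>\<^sup>2) \<le> Q \<bullet> X - \<sigma> * (Q \<bullet> Y)"
  then have gt: "\<sigma> * s < \<sigma> * (Q \<bullet> Y) - Q \<bullet> X" by (simp add: s_def)
  have "0 < \<sigma>"
  proof (rule ccontr)
    assume "\<not> 0 < \<sigma>"
    then have "\<sigma> = 0" using s(2) by simp
    then show False using gt a by simp
  qed
  have "\<sigma> * s < \<sigma> * (Q \<bullet> Y)" using gt a by simp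
  then have "s < Q \<bullet> Y" using \<open>0 < \<sigma>\<close> by simp
  then have "s\<^sup>2 < (Q \<bullet> Y)\<^sup>2" using s2 by (intro power_strict_mono) auto
  then have "s\<^sup>2 * (1 - (Q \<bullet> Y)\<^sup>2) \<le> s\<^sup>2 * \<sigma>\<^sup>2" using s2 by (intro mult_left_mono) (auto simp: algebra_simps)
  moreover have "(\<sigma> * s)\<^sup>2 < (\<sigma> * (Q \<bullet> Y) - Q \<bullet> X)\<^sup>2"
    using gt s2 \<open>0 < \<sigma>\<close> by (intro power_strict_mono) auto
  ultimately show False using cs by (simp add: power_mult_distrib mult.commute power2_commute)
qed

lemma spolar_arc_inner_le:
  fixes x z k :: "'a::euclidean_space"
  assumes x: "x \<in> spolar B" and max: "\<forall>k\<in>spolar B. z \<bullet> k \<le> z \<bullet> x" and a0: "0 \<le> z \<bullet> x"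
    and k: "k \<in> spolar B" and t: "0 < t" "t \<le> 1/4"
  shows "z \<bullet> k \<le> (z \<bullet> x) * (x \<bullet> k) + t * ((z \<bullet> x) * (1 - x \<bullet> k))"
proof -
  define a where "a = z \<bullet> x"
  define c where "c = x \<bullet> k"
  have xx: "x \<bullet> x = 1" and kk: "k \<bullet> k = 1" using x k by (auto simp: spolar_def norm_eq_1)
  have c1: "\<bar>c\<bar> \<le> 1" using unit_inner_abs_le x k by (auto simp: c_def spolar_def)
  define u where "u = t * (1 - t) * (1 - c)"
  have "t * (1 - t) * (1 - c) \<le> t * (1 - t) * 2" using t c1 by (intro mult_left_mono) auto
  moreover have "t * (1 - t) < 1/4"
    using t mult_pos_pos[OF t(1) t(1)] right_diff_distrib[of t 1 t] by linarith
  ultimately have u1: "2 * u < 1" by (simp add: u_def)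
  define v where "v = (1 - t) *\<^sub>R x + t *\<^sub>R k"
  have vv: "v \<bullet> v = 1 - 2 * u"
    by (simp add: v_def u_def inner_add_left inner_add_right xx kk inner_commute[of k x]
        c_def[symmetric] algebra_simps power2_eq_square)
  then have v0: "v \<noteq> 0" using u1 by auto
  have "norm v = sqrt (1 - 2 * u)" using vv by (simp add: norm_eq_sqrt_inner)
  moreover have "sqrt (1 - 2 * u) \<le> 1 - u"
    using u1 by (intro real_le_lsqrt) (auto simp: power2_eq_square algebra_simps)
  ultimately have nv: "norm v \<le> 1 - u" by simp
  have "0 \<le> b \<bullet> v" if "b \<in> B" for b
    using that x k t by (simp add: v_def inner_add_right spolar_def)
  then have "v /\<^sub>R norm v \<in> spolar B" using normalize_in_spolar[OF v0] by blast
  then have "(z \<bullet> v) / norm v \<le> a" using max unfolding a_def inner_normalize_right[symmetric] by blast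
  then have "z \<bullet> v \<le> a * norm v" using v0 by (simp add: divide_le_eq mult.commute)
  also have "\<dots> \<le> a * (1 - u)" using nv a0 by (intro mult_left_mono) (auto simp: a_def)
  finally have "t * (z \<bullet> k) \<le> t * (a * c + t * (a * (1 - c)))"
    by (simp add: v_def u_def inner_add_right a_def algebra_simps)
  then show ?thesis using t by (simp add: a_def c_def)
qed

text \<open>First-order condition for a maximum of \<open>z \<bullet> _\<close> on the polar.\<close>

lemma spolar_argmax_inner_le:
  fixes x z k :: "'a::euclidean_space"
  assumes x: "x \<in> spolar B" and max: "\<forall>k\<in>spolar B. z \<bullet> k \<le> z \<bullet> x" and a0: "0 \<le> z \<bullet> x"
    and k: "k \<in> spolar B"
  shows "z \<bullet> k \<le> (z \<bullet> x) * (x \<bullet> k)"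
proof (rule field_le_epsilon)
  fix \<epsilon> :: real assume "0 < \<epsilon>"
  define m where "m = (z \<bullet> x) * (1 - x \<bullet> k)"
  define t where "t = min (1/4) (\<epsilon> / (m + 1))"
  have m: "0 \<le> m"
    using a0 unit_inner_abs_le[of x k] x k by (simp add: m_def spolar_def abs_le_iff)
  have "t \<le> \<epsilon> / (m + 1)" by (simp add: t_def)
  then have "t * (m + 1) \<le> \<epsilon>" using m by (simp add: le_divide_eq)
  moreover have "0 < t" using \<open>0 < \<epsilon>\<close> m by (simp add: t_def)
  moreover have "t \<le> 1/4" unfolding t_def by (rule min.cobounded1)
  ultimately show "z \<bullet> k \<le> (z \<bullet> x) * (x \<bullet> k) + \<epsilon>"
    using spolar_arc_inner_le[OF x max a0 k, of t] by (simp add: m_def algebra_simps)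
qed

lemma separate_point_from_closed_convex_cone:
  fixes C :: "'a::euclidean_space set"
  assumes "convex C" "closed C" "0 \<in> C" "\<And>x l. x \<in> C \<Longrightarrow> 0 \<le> l \<Longrightarrow> l *\<^sub>R x \<in> C"
    and "z \<notin> C"
  obtains a where "a \<bullet> z < 0" "\<forall>x\<in>C. 0 \<le> a \<bullet> x"
proof -
  obtain a b where ab: "a \<bullet> z < b" "\<forall>x\<in>C. b < a \<bullet> x"
    using separating_hyperplane_closed_point[OF assms(1,2,5)] by blast
  have b: "b < 0" using ab(2) assms(3) by force
  have "0 \<le> a \<bullet> x" if x: "x \<in> C" for x
  proof (rule ccontr)
    assume "\<not> 0 \<le> a \<bullet> x"
    then have "0 \<le> b / (a \<bullet> x)" "a \<bullet> ((b / (a \<bullet> x)) *\<^sub>R x) = b"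
      using b by (auto simp: divide_nonpos_neg less_imp_le)
    then show False using ab(2) assms(4)[OF x] by force
  qed
  then show ?thesis using that ab(1) b by force
qed

lemma spolar_spolar_cone:
  fixes C :: "'a::euclidean_space set"
  assumes "convex C" "closed C" "0 \<in> C" "\<And>x l. x \<in> C \<Longrightarrow> 0 \<le> l \<Longrightarrow> l *\<^sub>R x \<in> C"
  shows "spolar (spolar (C \<inter> sphere 0 1)) = C \<inter> sphere 0 1"
proof (intro set_eqI iffI)
  fix Z assume "Z \<in> C \<inter> sphere 0 1"
  then show "Z \<in> spolar (spolar (C \<inter> sphere 0 1))" by (auto simp: spolar_def inner_commute)
next
  fix Z assume Z: "Z \<in> spolar (spolar (C \<inter> sphere 0 1))"
  show "Z \<in> C \<inter> sphere 0 1"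
  proof (rule ccontr)
    assume "Z \<notin> C \<inter> sphere 0 1"
    then have "Z \<notin> C" using Z spolar_subset_sphere by blast
    then obtain a where a: "a \<bullet> Z < 0" "\<forall>x\<in>C. 0 \<le> a \<bullet> x"
      using separate_point_from_closed_convex_cone[OF assms] by blast
    then have a0: "a \<noteq> 0" by auto
    have "a /\<^sub>R norm a \<in> spolar (C \<inter> sphere 0 1)"
      using normalize_in_spolar[OF a0] a(2) by (simp add: inner_commute)
    moreover have "\<forall>b\<in>spolar (C \<inter> sphere 0 1). 0 \<le> b \<bullet> Z"
      using Z unfolding spolar_def[of "spolar (C \<inter> sphere 0 1)"] by blast
    ultimately have "0 \<le> (a /\<^sub>R norm a) \<bullet> Z" by blast
    then have "0 \<le> (a \<bullet> Z) / norm a" by (simp only: inner_normalize_left)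
    then show False using a(1) a0 by (simp add: zero_le_divide_iff)
  qed
qed

lemma convex_norm_inner_cone: "0 \<le> \<beta> \<Longrightarrow> convex {v::'a::real_inner. \<beta> * norm v \<le> k \<bullet> v}"
proof (rule convexI)
  fix u v :: 'a and t1 t2 :: real
  assume \<beta>: "0 \<le> \<beta>" and u: "u \<in> {v. \<beta> * norm v \<le> k \<bullet> v}" and v: "v \<in> {v. \<beta> * norm v \<le> k \<bullet> v}"
    and t: "0 \<le> t1" "0 \<le> t2" "t1 + t2 = 1"
  have "\<beta> * norm (t1 *\<^sub>R u + t2 *\<^sub>R v) \<le> \<beta> * (t1 * norm u + t2 * norm v)"
    using norm_triangle_ineq[of "t1 *\<^sub>R u" "t2 *\<^sub>R v"] t \<beta> by (intro mult_left_mono) auto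
  also have "\<dots> = t1 * (\<beta> * norm u) + t2 * (\<beta> * norm v)" by (simp add: algebra_simps)
  also have "\<dots> \<le> t1 * (k \<bullet> u) + t2 * (k \<bullet> v)"
    using u v t by (intro add_mono mult_left_mono) auto
  also have "\<dots> = k \<bullet> (t1 *\<^sub>R u + t2 *\<^sub>R v)" by (simp add: inner_add_right)
  finally show "t1 *\<^sub>R u + t2 *\<^sub>R v \<in> {v. \<beta> * norm v \<le> k \<bullet> v}" by simp
qed

section \<open>Polar pairs of hemispherical bodies\<close>

text \<open>The bipolar identity expresses spherical convexity of \<open>K\<close>. \<open>bdK\<close> and \<open>bdL\<close> are the
  boundaries of \<open>K\<close> and of its polar \<open>L\<close>; the points of \<open>bdL\<close> are the centres of the
  hemispheres supporting \<open>K\<close>.\<close>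

locale polar_body =
  fixes K :: "'a::euclidean_space set" and N :: 'a
  assumes DIM_ge_2: "2 \<le> DIM('a)" and norm_N: "norm N = 1"
    and K_subset_sphere: "K \<subseteq> sphere 0 1" and compact_K: "compact K"
    and inner_N_K_pos: "\<And>Z. Z \<in> K \<Longrightarrow> 0 < N \<bullet> Z"
    and K_nhd_N: "\<exists>e>0. \<forall>Z\<in>sphere 0 1. dist Z N < e \<longrightarrow> Z \<in> K"
    and spolar_spolar_K: "spolar (spolar K) = K"
begin

abbreviation "L \<equiv> spolar K"

definition "bdK = {X \<in> K. \<exists>P\<in>L. X \<bullet> P = 0}"
definition "bdL = {P \<in> L. \<exists>X\<in>K. P \<bullet> X = 0}"

lemma K_eq_spolar_L: "K = spolar L"
  using spolar_spolar_K by simp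

lemma N_in_K: "N \<in> K"
  using K_nhd_N norm_N by auto

lemma K_ne: "K \<noteq> {}"
  using N_in_K by auto

lemma norm_K: "X \<in> K \<Longrightarrow> norm X = 1"
  using K_subset_sphere by auto

lemma norm_L: "P \<in> L \<Longrightarrow> norm P = 1"
  by (simp add: spolar_def)

lemma N_in_L: "N \<in> L"
  using norm_N inner_N_K_pos by (auto simp: spolar_def inner_commute less_imp_le)

lemma L_ne: "L \<noteq> {}"
  using N_in_L by auto

lemma inner_K_L_nonneg: "X \<in> K \<Longrightarrow> P \<in> L \<Longrightarrow> 0 \<le> P \<bullet> X \<and> 0 \<le> X \<bullet> P"
  by (auto simp: spolar_def inner_commute)

lemma inner_N_L_pos:
  assumes "P \<in> L"
  shows "0 < N \<bullet> P"
proof (rule ccontr)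
  assume neg: "\<not> 0 < N \<bullet> P"
  obtain e where e: "e > 0" "\<forall>Z\<in>sphere 0 1. dist Z N < e \<longrightarrow> Z \<in> K"
    using K_nhd_N by blast
  define v where "v = N - (e / 4) *\<^sub>R P"
  have nP: "norm P = 1" using assms norm_L by blast
  have vP: "v \<bullet> P < 0"
    using neg e nP by (simp add: v_def inner_diff_left norm_eq_1)
  then have v0: "v \<noteq> 0" by auto
  have "dist (v /\<^sub>R norm v) N < e"
    using dist_normalize_le[OF norm_N v0] nP e by (simp add: v_def)
  then have "v /\<^sub>R norm v \<in> K" using e v0 by auto
  then have "0 \<le> (v /\<^sub>R norm v) \<bullet> P"
    using assms by (auto simp: spolar_def inner_commute)
  then have "0 \<le> (v \<bullet> P) / norm v" by (simp only: inner_normalize_left)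
  then show False using vP v0 by (simp add: zero_le_divide_iff)
qed

lemma uminus_notin_L: "P \<in> L \<Longrightarrow> - P \<notin> L"
  using inner_N_L_pos[of P] inner_N_L_pos[of "-P"] by auto

lemma uminus_notin_K: "X \<in> K \<Longrightarrow> - X \<notin> K"
  using inner_N_K_pos[of X] inner_N_K_pos[of "-X"] by auto

lemma N_notin_bdL: "P \<in> bdL \<Longrightarrow> P \<noteq> N"
  using inner_N_K_pos by (force simp: bdL_def)

lemma exists_L_neq_N: "\<exists>P\<in>L. P \<noteq> N"
proof -
  obtain y where y: "y \<noteq> 0" "orthogonal N y"
    using orthogonal_to_vector_exists[OF DIM_ge_2] by blast
  define E where "E = y /\<^sub>R norm y"
  have E: "norm E = 1" "N \<bullet> E = 0"
    using y by (simp_all add: E_def orthogonal_def)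
  have "continuous_on K (\<lambda>Z. N \<bullet> Z)" by (intro continuous_intros)
  then obtain Z0 where Z0: "Z0 \<in> K" "\<forall>Z\<in>K. N \<bullet> Z0 \<le> N \<bullet> Z"
    using continuous_attains_inf[OF compact_K K_ne] by blast
  define m where "m = N \<bullet> Z0"
  have m: "0 < m" using inner_N_K_pos[OF Z0(1)] by (simp add: m_def)
  define v where "v = N + (m / 2) *\<^sub>R E"
  have vE: "v \<bullet> E = m / 2" using E by (simp add: v_def inner_add_left norm_eq_1)
  then have v0: "v \<noteq> 0" using m by auto
  have "0 \<le> b \<bullet> v" if b: "b \<in> K" for b
  proof -
    have "-1 \<le> b \<bullet> E" using unit_inner_abs_le[OF norm_K[OF b] E(1)] by (simp add: abs_le_iff)
    then have "(m / 2) * (-1) \<le> (m / 2) * (b \<bullet> E)" using m by (intro mult_left_mono) auto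
    moreover have "m \<le> b \<bullet> N" using Z0(2) b by (simp add: m_def inner_commute[of b N])
    ultimately show ?thesis using m by (simp add: v_def inner_add_right)
  qed
  then have "v /\<^sub>R norm v \<in> L" using normalize_in_spolar[OF v0] by blast
  moreover have "v /\<^sub>R norm v \<noteq> N"
    using vE E(2) v0 m by (auto simp: inner_normalize_left inner_commute)
  ultimately show ?thesis by blast
qed

lemma L_interior_inner_decrease:
  assumes P: "P \<in> L" and int: "\<forall>X\<in>K. 0 < P \<bullet> X" and Q: "norm Q = 1" "Q \<noteq> P" "Q \<noteq> - P"
  shows "\<exists>P'\<in>L. P' \<bullet> Q < P \<bullet> Q"
proof -
  have nP: "norm P = 1" using P norm_L by blast
  have "continuous_on K (\<lambda>X. P \<bullet> X)" by (intro continuous_intros)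
  then obtain X0 where X0: "X0 \<in> K" "\<forall>X\<in>K. P \<bullet> X0 \<le> P \<bullet> X"
    using continuous_attains_inf[OF compact_K K_ne] by blast
  define t where "t = min (P \<bullet> X0 / 4) (1/2)"
  have t: "0 < t" "t \<le> 1/2" using X0 int by (auto simp: t_def)
  have t2: "2 * t < P \<bullet> X" if "X \<in> K" for X
  proof -
    have "t \<le> P \<bullet> X0 / 4" "0 < P \<bullet> X0" using X0(1) int by (auto simp: t_def)
    moreover have "P \<bullet> X0 \<le> P \<bullet> X" using X0(2) that by blast
    ultimately show ?thesis by linarith
  qed
  define v where "v = P + t *\<^sub>R ((P \<bullet> Q) *\<^sub>R P - Q)"
  have pos: "0 < b \<bullet> v" if b: "b \<in> K" for b
  proof -
    have "\<bar>b \<bullet> P\<bar> \<le> 1" "\<bar>b \<bullet> Q\<bar> \<le> 1" "\<bar>P \<bullet> Q\<bar> \<le> 1"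
      using unit_inner_abs_le[OF norm_K[OF b]] unit_inner_abs_le[OF nP] nP Q(1) by auto
    then have "\<bar>(P \<bullet> Q) * (b \<bullet> P)\<bar> \<le> 1" unfolding abs_mult by (intro mult_le_one) auto
    then have "t * (-2) \<le> t * ((P \<bullet> Q) * (b \<bullet> P) - b \<bullet> Q)"
      using t \<open>\<bar>b \<bullet> Q\<bar> \<le> 1\<close> by (intro mult_left_mono) (auto simp: abs_le_iff)
    moreover have "b \<bullet> v = b \<bullet> P + t * ((P \<bullet> Q) * (b \<bullet> P) - b \<bullet> Q)"
      by (simp add: v_def inner_add_right inner_diff_right)
    ultimately show ?thesis using t2[OF b] inner_commute[of P b] by linarith
  qed
  have v0: "v \<noteq> 0" using pos[OF N_in_K] by auto
  have "v /\<^sub>R norm v \<in> L" using normalize_in_spolar[OF v0] pos less_imp_le by blast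
  moreover have "(v /\<^sub>R norm v) \<bullet> Q < P \<bullet> Q"
    unfolding v_def using tilt_inner_lt[OF nP Q(1) Q(2) Q(3) t(1) t(2)] .
  ultimately show ?thesis by blast
qed

lemma bdL_ne: "bdL \<noteq> {}"
proof -
  have "continuous_on L (\<lambda>P. N \<bullet> P)" by (intro continuous_intros)
  then obtain P0 where P0: "P0 \<in> L" "\<forall>P\<in>L. N \<bullet> P0 \<le> N \<bullet> P"
    using continuous_attains_inf[OF compact_spolar L_ne] by blast
  show ?thesis
  proof (cases "\<forall>X\<in>K. 0 < P0 \<bullet> X")
    case False
    then obtain X where "X \<in> K" "P0 \<bullet> X = 0" using inner_K_L_nonneg[of _ P0] P0(1) by force
    then show ?thesis using P0 by (auto simp: bdL_def)
  next
    case True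
    have "N \<noteq> P0"
    proof
      assume "N = P0"
      obtain P1 where P1: "P1 \<in> L" "P1 \<noteq> N" using exists_L_neq_N by blast
      have "N \<bullet> N \<le> N \<bullet> P1" using P0 P1 \<open>N = P0\<close> by auto
      then show False
        using unit_inner_eq_1D[OF norm_N norm_L[OF P1(1)]] unit_inner_abs_le[OF norm_N norm_L[OF P1(1)]]
          P1 norm_N by (simp add: norm_eq_1 abs_le_iff)
    qed
    moreover have "N \<noteq> - P0" using inner_N_L_pos[OF P0(1)] norm_N by (auto simp: norm_eq_1)
    ultimately obtain P' where "P' \<in> L" "P' \<bullet> N < P0 \<bullet> N"
      using L_interior_inner_decrease[OF P0(1) True norm_N] by auto
    then show ?thesis using P0 by (force simp: inner_commute)
  qed
qed

lemma bdK_ne: "bdK \<noteq> {}"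
  using bdL_ne by (force simp: bdL_def bdK_def inner_commute)

lemma nearest_point_decomposition:
  assumes z: "norm z = 1" "z \<notin> L" and nonneg: "\<exists>k\<in>L. 0 \<le> z \<bullet> k"
  obtains x W where "x \<in> L" "\<forall>k\<in>L. z \<bullet> k \<le> z \<bullet> x" "0 \<le> z \<bullet> x"
    "z = (z \<bullet> x) *\<^sub>R x - W" "W \<noteq> 0" "W \<bullet> x = 0" "\<forall>k\<in>L. 0 \<le> W \<bullet> k" "W /\<^sub>R norm W \<in> K"
proof -
  have "continuous_on L (\<lambda>k. z \<bullet> k)" by (intro continuous_intros)
  then obtain x where x: "x \<in> L" "\<forall>k\<in>L. z \<bullet> k \<le> z \<bullet> x"
    using continuous_attains_sup[OF compact_spolar L_ne] by blast
  define a where "a = z \<bullet> x"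
  have a0: "0 \<le> a" using nonneg x by (force simp: a_def)
  define W where "W = a *\<^sub>R x - z"
  have xx: "x \<bullet> x = 1" using norm_L[OF x(1)] by (simp add: norm_eq_1)
  have Wk: "\<forall>k\<in>L. 0 \<le> W \<bullet> k"
    using spolar_argmax_inner_le[of x K z] x a0 by (auto simp: a_def W_def inner_diff_left)
  have Wx: "W \<bullet> x = 0" using xx by (simp add: W_def inner_diff_left a_def)
  have W0: "W \<noteq> 0"
  proof
    assume "W = 0"
    then have zx: "z = a *\<^sub>R x" by (simp add: W_def)
    then have "\<bar>a\<bar> = 1" using z(1) norm_L[OF x(1)] by simp
    then show False using zx a0 z(2) x(1) by simp
  qed
  have "W /\<^sub>R norm W \<in> K"
    using normalize_in_spolar[OF W0, of L] Wk K_eq_spolar_L by (simp add: inner_commute)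
  then show ?thesis using that[OF x _ _ W0 Wx Wk] a0 by (simp add: a_def W_def)
qed

end

section \<open>Polar pairs of constant width\<close>

text \<open>By \<open>width_K\<close> below, \<open>K\<close> has constant width exactly when \<open>min_inner L\<close> is constant on
  \<open>bdL\<close>; the constant is \<open>\<kappa> = - cos \<Delta>(K)\<close>.\<close>

locale constant_width_body = polar_body +
  fixes \<kappa> :: real
  assumes min_inner_L_bdL: "\<And>P. P \<in> bdL \<Longrightarrow> min_inner L P = \<kappa>"
begin

lemma kappa_le_inner_bdL: "P \<in> bdL \<Longrightarrow> Q \<in> L \<Longrightarrow> \<kappa> \<le> P \<bullet> Q"
  using min_inner_L_bdL min_inner_le[OF compact_spolar] by metis

lemma kappa_attained:
  assumes "P \<in> bdL"
  obtains Q where "Q \<in> L" "P \<bullet> Q = \<kappa>"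
  using min_inner_attained[OF compact_spolar L_ne] min_inner_L_bdL[OF assms] by metis

lemma kappa_bounds: "-1 \<le> \<kappa>" "\<kappa> < 1"
proof -
  obtain P where P: "P \<in> bdL" using bdL_ne by blast
  have PL: "P \<in> L" using P by (simp add: bdL_def)
  obtain Q where Q: "Q \<in> L" "P \<bullet> Q = \<kappa>" using kappa_attained[OF P] by blast
  show "-1 \<le> \<kappa>" using unit_inner_abs_le[OF norm_L[OF PL] norm_L[OF Q(1)]] Q by simp
  show "\<kappa> < 1"
  proof (rule ccontr)
    assume "\<not> \<kappa> < 1"
    then have "1 \<le> P \<bullet> N" using kappa_le_inner_bdL[OF P N_in_L] by auto
    then have "P = N"
      using unit_inner_eq_1D[OF norm_L[OF PL] norm_N] unit_inner_abs_le[OF norm_L[OF PL] norm_N] by simp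
    then show False using N_notin_bdL[OF P] by simp
  qed
qed

lemma kappa_sq_le_1: "\<kappa>\<^sup>2 \<le> 1"
  using kappa_bounds abs_square_le_1[of \<kappa>] by simp

lemma sqrt_one_minus_kappa_sq: "sqrt (1 - \<kappa>\<^sup>2) * sqrt (1 - \<kappa>\<^sup>2) = 1 - \<kappa> * \<kappa>"
  using kappa_sq_le_1 by (simp add: power2_eq_square)

lemma min_mutual_inner_L: "min_mutual_inner L = \<kappa>"
proof (rule antisym)
  obtain P0 where P0: "P0 \<in> bdL" using bdL_ne by blast
  obtain Q0 where Q0: "Q0 \<in> L" "P0 \<bullet> Q0 = \<kappa>" using kappa_attained[OF P0] by blast
  show "min_mutual_inner L \<le> \<kappa>"
    using min_mutual_inner_le[OF compact_spolar _ Q0(1), of P0] P0 Q0 by (simp add: bdL_def)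
next
  obtain P Q where PQ: "P \<in> L" "Q \<in> L" "min_mutual_inner L = P \<bullet> Q"
    using min_mutual_inner_attained[OF compact_spolar L_ne] by blast
  show "\<kappa> \<le> min_mutual_inner L"
  proof (cases "P \<in> bdL")
    case True
    then show ?thesis using kappa_le_inner_bdL PQ by simp
  next
    case False
    then have int: "\<forall>X\<in>K. 0 < P \<bullet> X" using PQ(1) inner_K_L_nonneg by (force simp: bdL_def)
    show ?thesis
    proof (cases "Q = P")
      case True
      then show ?thesis using PQ norm_L[OF PQ(1)] kappa_bounds by (simp add: norm_eq_1)
    next
      case False
      have "Q \<noteq> - P" using uminus_notin_L[OF PQ(1)] PQ(2) by auto
      then obtain P' where "P' \<in> L" "P' \<bullet> Q < P \<bullet> Q"
        using L_interior_inner_decrease[OF PQ(1) int norm_L[OF PQ(2)] False] by blast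
      then show ?thesis using min_mutual_inner_le[OF compact_spolar _ PQ(2), of P'] PQ by simp
    qed
  qed
qed

lemma kappa_le_inner_L: "P \<in> L \<Longrightarrow> Q \<in> L \<Longrightarrow> \<kappa> \<le> P \<bullet> Q"
  using min_mutual_inner_le[OF compact_spolar] min_mutual_inner_L by metis

lemma min_inner_K_bdK_le:
  assumes X: "X \<in> bdK"
  shows "min_inner K X \<le> - \<kappa>"
proof -
  obtain P where P: "P \<in> L" "X \<bullet> P = 0" and XK: "X \<in> K" using X by (auto simp: bdK_def)
  have PX: "P \<bullet> X = 0" using P(2) by (simp add: inner_commute)
  have PbdL: "P \<in> bdL" using P XK PX by (auto simp: bdL_def)
  have nX: "norm X = 1" and nP: "norm P = 1" using norm_K[OF XK] norm_L[OF P(1)] .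
  obtain Y where Y: "Y \<in> K" "min_inner K X = X \<bullet> Y" using min_inner_attained[OF compact_K K_ne] by blast
  define \<sigma> where "\<sigma> = min_inner K X"
  have s1: "\<bar>\<sigma>\<bar> \<le> 1" using unit_inner_abs_le[OF nX norm_K[OF Y(1)]] Y by (simp add: \<sigma>_def)
  show ?thesis
  proof (cases "0 \<le> \<sigma>")
    case True
    have "\<forall>Z\<in>K. \<sigma> \<le> X \<bullet> Z \<and> 0 \<le> P \<bullet> Z"
      using min_inner_le[OF compact_K] inner_K_L_nonneg P(1) by (auto simp: \<sigma>_def)
    then have "(- \<sigma>) *\<^sub>R P + sqrt (1 - \<sigma>\<^sup>2) *\<^sub>R X \<in> L"
      using tilted_in_spolar[OF nX nP P(2) True _ K_subset_sphere] s1 by auto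
    then have "\<kappa> \<le> P \<bullet> ((- \<sigma>) *\<^sub>R P + sqrt (1 - \<sigma>\<^sup>2) *\<^sub>R X)" using kappa_le_inner_bdL[OF PbdL] by blast
    then show ?thesis using nP PX by (simp add: inner_add_right inner_diff_right norm_eq_1 \<sigma>_def)
  next
    case False
    show ?thesis
    proof (cases "\<kappa> \<le> 0")
      case True
      then show ?thesis using False by (simp add: \<sigma>_def)
    next
      case False
      have "\<forall>Q\<in>L. \<kappa> \<le> P \<bullet> Q \<and> 0 \<le> X \<bullet> Q" using kappa_le_inner_bdL[OF PbdL] inner_K_L_nonneg XK by auto
      then have Z: "(- \<kappa>) *\<^sub>R X + sqrt (1 - \<kappa>\<^sup>2) *\<^sub>R P \<in> K"
        using tilted_in_spolar[OF nP nX PX _ _ spolar_subset_sphere] False kappa_bounds K_eq_spolar_L by auto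
      have "min_inner K X \<le> X \<bullet> ((- \<kappa>) *\<^sub>R X + sqrt (1 - \<kappa>\<^sup>2) *\<^sub>R P)"
        using min_inner_le[OF compact_K Z] .
      then show ?thesis using nX P(2) by (simp add: inner_add_right inner_diff_right norm_eq_1)
    qed
  qed
qed

lemma L_subset_K:
  assumes "0 \<le> \<kappa>"
  shows "L \<subseteq> K"
proof
  fix P assume P: "P \<in> L"
  have "0 \<le> Q \<bullet> P" if "Q \<in> L" for Q using kappa_le_inner_L[OF that P] assms by simp
  then show "P \<in> K" using P K_eq_spolar_L by (auto simp: spolar_def)
qed

lemma min_inner_K_no_gap:
  assumes k: "\<kappa> < 0" and X: "X \<in> K" and m0: "0 \<le> min_inner K X"
  shows "- \<kappa> \<le> min_inner K X"
proof (rule ccontr)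
  assume m1: "\<not> - \<kappa> \<le> min_inner K X"
  obtain Y where Y: "Y \<in> K" "min_inner K X = X \<bullet> Y" using min_inner_attained[OF compact_K K_ne] by blast
  define \<sigma> where "\<sigma> = min_inner K X"
  have s0: "0 \<le> \<sigma>" and s1: "\<sigma> < 1" using m0 m1 kappa_bounds by (auto simp: \<sigma>_def)
  have nX: "norm X = 1" and nY: "norm Y = 1" using norm_K X Y(1) by auto
  have XY: "X \<bullet> Y = \<sigma>" and YX: "Y \<bullet> X = \<sigma>" using Y by (simp_all add: \<sigma>_def inner_commute)
  have XX: "X \<bullet> X = 1" and YY: "Y \<bullet> Y = 1" using nX nY by (simp_all add: norm_eq_1)
  define w where "w = X - \<sigma> *\<^sub>R Y"
  have "w \<bullet> w = 1 - \<sigma>\<^sup>2"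
    by (simp add: w_def inner_diff_left inner_diff_right XX YY XY YX power2_eq_square algebra_simps)
  then have nw: "norm w = sqrt (1 - \<sigma>\<^sup>2)" by (simp add: norm_eq_sqrt_inner)
  have nwp: "0 < norm w" using nw s0 s1 by (simp add: power_less_one_iff abs_square_less_1)
  then have w0: "w \<noteq> 0" by auto
  have "0 \<le> Z \<bullet> w" if Z: "Z \<in> K" for Z
  proof -
    have "\<sigma> \<le> X \<bullet> Z" using min_inner_le[OF compact_K Z] by (simp add: \<sigma>_def)
    moreover have "\<sigma> * (Z \<bullet> Y) \<le> \<sigma>"
      using unit_inner_abs_le[OF norm_K[OF Z] nY] s0 by (simp add: mult_left_le abs_le_iff)
    ultimately show ?thesis by (simp add: w_def inner_diff_right inner_commute[of Z X])
  qed
  then have "w /\<^sub>R norm w \<in> L" using normalize_in_spolar[OF w0] by blast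
  moreover have "(w /\<^sub>R norm w) \<bullet> Y = 0" using XY YY by (simp add: w_def inner_diff_left)
  ultimately have "w /\<^sub>R norm w \<in> bdL" using Y(1) by (auto simp: bdL_def)
  then obtain Q where Q: "Q \<in> L" "(w /\<^sub>R norm w) \<bullet> Q = \<kappa>" using kappa_attained by blast
  have "- \<sigma> * sqrt (1 - \<sigma>\<^sup>2) \<le> Q \<bullet> X - \<sigma> * (Q \<bullet> Y)"
    using inner_residual_lower_bound[OF nX nY norm_L[OF Q(1)] XY s0 s1]
      inner_K_L_nonneg[OF X Q(1)] inner_K_L_nonneg[OF Y(1) Q(1)] by simp
  also have "\<dots> = w \<bullet> Q" by (simp add: w_def inner_diff_right inner_commute[of _ Q])
  finally have "- \<sigma> \<le> (w \<bullet> Q) / norm w" using nw nwp by (simp add: le_divide_eq)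
  moreover have "(w \<bullet> Q) / norm w = \<kappa>" using Q(2) by (simp only: inner_normalize_left)
  ultimately show False using m1 by (simp add: \<sigma>_def)
qed

text \<open>\<open>min_inner K\<close> is continuous and positive at \<open>N\<close>; along the arc from \<open>N\<close> to \<open>X0\<close> it
  would have to enter the gap excluded by \<open>min_inner_K_no_gap\<close>.\<close>

lemma inner_K_ge_neg_kappa_if_neg:
  assumes k: "\<kappa> < 0" and X0: "X0 \<in> K" and Z0: "Z0 \<in> K"
  shows "- \<kappa> \<le> X0 \<bullet> Z0"
proof (rule ccontr)
  assume "\<not> - \<kappa> \<le> X0 \<bullet> Z0"
  then have mX0: "min_inner K X0 < - \<kappa>" using min_inner_le[OF compact_K Z0, of X0] by simp
  obtain Y where "Y \<in> K" "min_inner K N = N \<bullet> Y" using min_inner_attained[OF compact_K K_ne] by blast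
  then have mN: "0 < min_inner K N" using inner_N_K_pos by simp
  define g where "g = (\<lambda>t::real. ((1 - t) *\<^sub>R N + t *\<^sub>R X0) /\<^sub>R norm ((1 - t) *\<^sub>R N + t *\<^sub>R X0))"
  have nonzero: "(1 - t) *\<^sub>R N + t *\<^sub>R X0 \<noteq> 0" if "t \<in> {0..1}" for t
  proof -
    have "0 < (1 - t) + t * (N \<bullet> X0)"
      using that inner_N_K_pos[OF X0] by (cases "t = 0") (auto intro: add_nonneg_pos)
    moreover have "N \<bullet> ((1 - t) *\<^sub>R N + t *\<^sub>R X0) = (1 - t) + t * (N \<bullet> X0)"
      using norm_N by (simp add: inner_add_right norm_eq_1)
    ultimately show ?thesis by auto
  qed
  have gK: "g t \<in> K" if t: "t \<in> {0..1}" for t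
  proof -
    have "0 \<le> Q \<bullet> ((1 - t) *\<^sub>R N + t *\<^sub>R X0)" if "Q \<in> L" for Q
      using inner_K_L_nonneg[OF N_in_K that] inner_K_L_nonneg[OF X0 that] t by (simp add: inner_add_right)
    then show ?thesis
      unfolding g_def using normalize_in_spolar[OF nonzero[OF t]] K_eq_spolar_L by auto
  qed
  have "continuous_on {0..1} g"
    unfolding g_def using nonzero by (intro continuous_intros) auto
  then have cont: "continuous_on {0..1} (min_inner K \<circ> g)"
    using continuous_on_compose continuous_on_min_inner[OF compact_K K_ne K_subset_sphere] by blast
  have g01: "g 0 = N" "g 1 = X0" using norm_N norm_K[OF X0] by (simp_all add: g_def)
  show False
  proof (cases "min_inner K N < - \<kappa>")
    case True
    then show False using min_inner_K_no_gap[OF k N_in_K] mN by simp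
  next
    case False
    define y where "y = max (min_inner K X0) 0"
    have "(min_inner K \<circ> g) 1 \<le> y" "y \<le> (min_inner K \<circ> g) 0" using g01 False mN mX0 k
      by (auto simp: y_def)
    then obtain t where t: "t \<in> {0..1}" "min_inner K (g t) = y"
      using IVT2'[of "min_inner K \<circ> g" 1 y 0] cont by auto
    then show False using min_inner_K_no_gap[OF k gK[OF t(1)]] mX0 k by (simp add: y_def)
  qed
qed

lemma orthogonal_extension_if_kappa_0:
  assumes k: "\<kappa> = 0" and F: "finite F" "F \<subseteq> L" "p0 \<in> F" "pairwise orthogonal F"
    and V: "V \<in> K" "\<forall>p\<in>F. p \<bullet> V = 0"
  obtains q where "q \<in> L" "q \<notin> F" "\<forall>p\<in>F. p \<bullet> q = 0"
proof -
  define u where "u = (\<Sum>p\<in>F. p)"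
  have "p \<bullet> p0 = 0" if "p \<in> F - {p0}" for p
    using F(3,4) that unfolding pairwise_def orthogonal_def by blast
  moreover have "p0 \<bullet> p0 = 1" using F(2,3) norm_L[of p0] by (simp add: subset_iff norm_eq_1)
  ultimately have "u \<bullet> p0 = 1"
    using F(1,3) by (simp add: u_def sum.remove inner_add_left inner_sum_left)
  then have u0: "u \<noteq> 0" by auto
  have "0 \<le> b \<bullet> u" if "b \<in> K" for b
    unfolding u_def inner_sum_right using F(2) inner_K_L_nonneg[OF that] by (intro sum_nonneg) blast
  then have uL: "u /\<^sub>R norm u \<in> L" using normalize_in_spolar[OF u0] by blast
  have "(u /\<^sub>R norm u) \<bullet> V = 0" using V(2) by (simp add: u_def inner_sum_left)
  then have "u /\<^sub>R norm u \<in> bdL" using uL V(1) unfolding bdL_def by blast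
  then obtain q where q: "q \<in> L" "(u /\<^sub>R norm u) \<bullet> q = \<kappa>" by (rule kappa_attained)
  have qK: "q \<in> K" using q(1) L_subset_K[of] k by auto
  have nonneg: "\<forall>p\<in>F. 0 \<le> p \<bullet> q" using F(2) inner_K_L_nonneg[OF qK] by auto
  have "(\<Sum>p\<in>F. p \<bullet> q) = 0" using q(2) u0 k by (simp add: inner_normalize_left u_def inner_sum_left)
  then have pq: "\<forall>p\<in>F. p \<bullet> q = 0"
    using sum_nonneg_eq_0_iff[OF F(1), of "\<lambda>p. p \<bullet> q"] nonneg by simp
  moreover have "q \<notin> F"
  proof
    assume "q \<in> F"
    then have "q \<bullet> q = 0" using pq by blast
    then show False using norm_L[OF q(1)] by (simp add: norm_eq_1)
  qed
  ultimately show ?thesis using that q(1) by blast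
qed

text \<open>A point of \<open>K\<close> outside \<open>L\<close> would let \<open>orthogonal_extension_if_kappa_0\<close> produce
  \<open>DIM('a) + 1\<close> pairwise orthogonal unit vectors.\<close>

lemma K_subset_L_if_kappa_0:
  assumes k: "\<kappa> = 0"
  shows "K \<subseteq> L"
proof
  fix z assume z: "z \<in> K"
  show "z \<in> L"
  proof (rule ccontr)
    assume zL: "z \<notin> L"
    have "\<exists>k\<in>L. 0 \<le> z \<bullet> k" using inner_K_L_nonneg[OF z N_in_L] N_in_L by blast
    then obtain x W where x: "x \<in> L" and "\<forall>k\<in>L. z \<bullet> k \<le> z \<bullet> x" "0 \<le> z \<bullet> x"
      and zeq: "z = (z \<bullet> x) *\<^sub>R x - W" and "W \<noteq> 0" and Wx: "W \<bullet> x = 0"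
      and Wk: "\<forall>k\<in>L. 0 \<le> W \<bullet> k" and VK: "W /\<^sub>R norm W \<in> K"
      by (rule nearest_point_decomposition[OF norm_K[OF z] zL])
    have orth_W: "q \<bullet> W = 0" if q: "q \<in> L" "q \<bullet> x = 0" for q
    proof -
      have "0 \<le> q \<bullet> z" using inner_K_L_nonneg[OF z q(1)] by simp
      also have "q \<bullet> z = - (q \<bullet> W)"
        using q(2) by (subst zeq) (simp add: inner_diff_right)
      finally have "q \<bullet> W \<le> 0" by simp
      moreover have "0 \<le> q \<bullet> W" using Wk q(1) inner_commute[of W q] by auto
      ultimately show ?thesis by simp
    qed
    have "\<exists>F. finite F \<and> card F = Suc n \<and> F \<subseteq> L \<and> x \<in> F \<and> pairwise orthogonal F \<and> (\<forall>p\<in>F. p \<bullet> W = 0)"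
      for n
    proof (induction n)
      case 0
      show ?case using x Wx by (intro exI[of _ "{x}"]) (simp add: inner_commute)
    next
      case (Suc n)
      then obtain F where F: "finite F" "card F = Suc n" "F \<subseteq> L" "x \<in> F" "pairwise orthogonal F"
        "\<forall>p\<in>F. p \<bullet> W = 0" by blast
      have "\<forall>p\<in>F. p \<bullet> (W /\<^sub>R norm W) = 0" using F(6) by simp
      then obtain q where q: "q \<in> L" "q \<notin> F" "\<forall>p\<in>F. p \<bullet> q = 0"
        using orthogonal_extension_if_kappa_0[OF k F(1,3,4,5) VK] by blast
      have "q \<bullet> W = 0" using orth_W[OF q(1)] q(3) F(4) inner_commute[of x q] by simp
      have "pairwise orthogonal (insert q F)"
        using F(5) q(2,3) by (auto simp: pairwise_insert orthogonal_def inner_commute[of q])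
      then show ?case
        using F q \<open>q \<bullet> W = 0\<close> by (intro exI[of _ "insert q F"]) simp
    qed
    then obtain F where F: "card F = Suc DIM('a)" "F \<subseteq> L" "pairwise orthogonal F" by blast
    have "0 \<notin> F" using F(2) norm_L[of 0] by auto
    then have "independent F" using F(3) pairwise_orthogonal_independent by blast
    then have "card F \<le> DIM('a)" using independent_bound by blast
    then show False using F(1) by simp
  qed
qed

lemma kappa_cap_subset_L:
  assumes k: "0 < \<kappa>" and z: "norm z = 1" and cap: "\<forall>y\<in>L. \<kappa> \<le> z \<bullet> y"
  shows "z \<in> L"
proof (rule ccontr)
  assume zL: "z \<notin> L"
  have "\<kappa> \<le> z \<bullet> N" using cap N_in_L by blast
  then have "\<exists>k\<in>L. 0 \<le> z \<bullet> k" using N_in_L k by (intro bexI[of _ N]) auto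
  then obtain x W where x: "x \<in> L" and max: "\<forall>k\<in>L. z \<bullet> k \<le> z \<bullet> x" and a0: "0 \<le> z \<bullet> x"
    and "z = (z \<bullet> x) *\<^sub>R x - W" "W \<noteq> 0" and Wx: "W \<bullet> x = 0"
    and "\<forall>k\<in>L. 0 \<le> W \<bullet> k" and VK: "W /\<^sub>R norm W \<in> K"
    by (rule nearest_point_decomposition[OF z zL])
  have "x \<bullet> (W /\<^sub>R norm W) = 0" using Wx by (simp add: inner_commute)
  then have "x \<in> bdL" using x VK unfolding bdL_def by blast
  then obtain y where y: "y \<in> L" "x \<bullet> y = \<kappa>" by (rule kappa_attained)
  have "z \<bullet> x \<noteq> 1" using unit_inner_eq_1D[OF z norm_L[OF x]] zL x by auto
  then have "z \<bullet> x < 1" using unit_inner_abs_le[OF z norm_L[OF x]] by (simp add: abs_le_iff)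
  have "z \<bullet> y \<le> (z \<bullet> x) * (x \<bullet> y)" using spolar_argmax_inner_le[OF x max a0 y(1)] .
  also have "\<dots> < \<kappa>" using \<open>z \<bullet> x < 1\<close> y(2) k by simp
  finally show False using cap y(1) by force
qed

lemma partner_residual:
  assumes k: "0 < \<kappa>" and x: "x \<in> L" and y: "y \<in> L" "x \<bullet> y = \<kappa>"
  shows "norm (y - \<kappa> *\<^sub>R x) = sqrt (1 - \<kappa>\<^sup>2)" "0 < N \<bullet> (y - \<kappa> *\<^sub>R x)"
    and "\<And>q. q \<in> L \<Longrightarrow> \<kappa> * (1 - q \<bullet> x) \<le> q \<bullet> (y - \<kappa> *\<^sub>R x)"
proof -
  have "(y - \<kappa> *\<^sub>R x) \<bullet> (y - \<kappa> *\<^sub>R x) = 1 - \<kappa>\<^sup>2"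
    using norm_L[OF y(1)] norm_L[OF x] y(2)
    by (simp add: inner_diff_left inner_diff_right norm_eq_1 inner_commute power2_eq_square)
  then show "norm (y - \<kappa> *\<^sub>R x) = sqrt (1 - \<kappa>\<^sup>2)" by (simp add: norm_eq_sqrt_inner)
  moreover have "\<kappa>\<^sup>2 < 1" using mult_strict_left_mono[OF kappa_bounds(2) k] kappa_bounds(2)
    by (simp add: power2_eq_square)
  ultimately have nz: "y - \<kappa> *\<^sub>R x \<noteq> 0" by auto
  show bound: "\<kappa> * (1 - q \<bullet> x) \<le> q \<bullet> (y - \<kappa> *\<^sub>R x)" if q: "q \<in> L" for q
    using kappa_le_inner_L[OF q y(1)] by (simp add: inner_diff_right algebra_simps)
  have "0 \<le> q \<bullet> (y - \<kappa> *\<^sub>R x)" if q: "q \<in> L" for q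
  proof -
    have "q \<bullet> x \<le> 1" using unit_inner_abs_le[OF norm_L[OF q] norm_L[OF x]] by simp
    then show ?thesis using bound[OF q] k by (smt (verit) mult_nonneg_nonneg)
  qed
  then have "(y - \<kappa> *\<^sub>R x) /\<^sub>R norm (y - \<kappa> *\<^sub>R x) \<in> K"
    using normalize_in_spolar[OF nz, of L] K_eq_spolar_L by simp
  then have "0 < (N \<bullet> (y - \<kappa> *\<^sub>R x)) / norm (y - \<kappa> *\<^sub>R x)"
    using inner_N_K_pos by (metis inner_normalize_right)
  then show "0 < N \<bullet> (y - \<kappa> *\<^sub>R x)" by (simp add: zero_less_divide_iff)
qed

lemma partner_margin:
  assumes x: "x \<in> L" and pos: "\<And>y. y \<in> L \<Longrightarrow> x \<bullet> y = \<kappa> \<Longrightarrow> 0 < E \<bullet> y"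
  obtains \<delta> where "0 < \<delta>" "\<And>y. y \<in> L \<Longrightarrow> \<delta> \<le> x \<bullet> y - \<kappa> \<or> \<delta> \<le> E \<bullet> y"
proof -
  define f where "f y = max (x \<bullet> y - \<kappa>) (E \<bullet> y)" for y
  have "continuous_on L f" unfolding f_def by (intro continuous_intros)
  then obtain y0 where y0: "y0 \<in> L" "\<forall>y\<in>L. f y0 \<le> f y"
    using continuous_attains_inf[OF compact_spolar L_ne] by blast
  have "0 < f y0"
    using pos[OF y0(1)] kappa_le_inner_L[OF x y0(1)] by (cases "x \<bullet> y0 = \<kappa>") (auto simp: f_def)
  moreover have "f y0 \<le> x \<bullet> y - \<kappa> \<or> f y0 \<le> E \<bullet> y" if "y \<in> L" for y
    using y0(2) that by (auto simp: f_def le_max_iff_disj)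
  ultimately show ?thesis using that by blast
qed

lemma perturbation_in_L:
  assumes k: "0 < \<kappa>" and x: "x \<in> L" and Ex: "E \<bullet> x = 0"
    and pos: "\<And>y. y \<in> L \<Longrightarrow> x \<bullet> y = \<kappa> \<Longrightarrow> 0 < E \<bullet> y"
  obtains t where "0 < t" "(x + t *\<^sub>R E) /\<^sub>R norm (x + t *\<^sub>R E) \<in> L"
proof -
  obtain \<delta> where \<delta>: "0 < \<delta>" and margin: "\<And>y. y \<in> L \<Longrightarrow> \<delta> \<le> x \<bullet> y - \<kappa> \<or> \<delta> \<le> E \<bullet> y"
    using partner_margin[OF x pos] by blast
  define c where "c = E \<bullet> E"
  define D where "D = \<kappa> * c / 2 + norm E"
  define t where "t = min 1 (\<delta> / (D + 1))"
  have D: "0 \<le> D" "0 \<le> \<kappa> * c / 2" using k by (simp_all add: D_def c_def)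
  have t: "0 < t" "t \<le> 1" using \<delta> D by (auto simp: t_def)
  have "t \<le> \<delta> / (D + 1)" by (simp add: t_def)
  then have "t * (D + 1) \<le> \<delta>" using D by (simp add: le_divide_eq)
  then have tD: "t * D \<le> \<delta>" using t by (simp add: algebra_simps)
  define w where "w = x + t *\<^sub>R E"
  have xx: "x \<bullet> x = 1" using norm_L[OF x] by (simp add: norm_eq_1)
  have "w \<bullet> w = 1 + t\<^sup>2 * c"
    using xx Ex by (simp add: w_def c_def inner_add_left inner_add_right inner_commute power2_eq_square)
  then have nw: "norm w \<le> 1 + t\<^sup>2 * c / 2"
    using sqrt_one_plus_le[of "t\<^sup>2 * c"] by (simp add: norm_eq_sqrt_inner c_def)
  have w0: "w \<noteq> 0" using xx Ex by (auto simp: w_def inner_add_left dest: arg_cong[of _ _ "\<lambda>v. v \<bullet> x"])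
  have tt: "t * (t * (\<kappa> * c / 2)) \<le> t * (\<kappa> * c / 2)" using t D by (simp add: mult_left_le_one_le)
  have "\<kappa> \<le> (w /\<^sub>R norm w) \<bullet> y" if y: "y \<in> L" for y
  proof -
    have "\<kappa> * norm w \<le> \<kappa> + t * (t * (\<kappa> * c / 2))"
      using mult_left_mono[OF nw, of \<kappa>] k by (simp add: algebra_simps power2_eq_square)
    moreover have wy: "w \<bullet> y = x \<bullet> y + t * (E \<bullet> y)" by (simp add: w_def inner_add_left)
    moreover consider "\<delta> \<le> x \<bullet> y - \<kappa>" | "\<delta> \<le> E \<bullet> y" using margin[OF y] by blast
    then have "\<kappa> + t * (t * (\<kappa> * c / 2)) \<le> w \<bullet> y"
    proof cases
      case 1
      have "- norm E \<le> E \<bullet> y" using norm_cauchy_schwarz[of "- E" y] norm_L[OF y] by simp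
      then have "- (t * norm E) \<le> t * (E \<bullet> y)" using mult_left_mono[of _ _ t] t by fastforce
      then show ?thesis using 1 wy tD tt by (simp add: D_def algebra_simps)
    next
      case 2
      then have "t * \<delta> \<le> t * (E \<bullet> y)" using t by (simp add: mult_left_mono)
      moreover have "t * (\<kappa> * c / 2) \<le> t * D" using t by (simp add: D_def mult_left_mono)
      then have "t * (\<kappa> * c / 2) \<le> \<delta>" using tD by linarith
      then have "t * (t * (\<kappa> * c / 2)) \<le> t * \<delta>" using t by (simp add: mult_left_mono)
      ultimately show ?thesis using kappa_le_inner_L[OF x y] wy by linarith
    qed
    ultimately have "\<kappa> * norm w \<le> w \<bullet> y" by linarith
    then show ?thesis using w0 by (simp only: inner_normalize_left le_divide_eq mult.commute) simp
  qed
  then have "w /\<^sub>R norm w \<in> L" using kappa_cap_subset_L[OF k] w0 by simp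
  then show ?thesis using that t(1) by (simp add: w_def)
qed

text \<open>If the bound failed for \<open>k0\<close>, separating \<open>V\<close> from a cone containing all \<open>y - \<kappa> x\<close>
  with \<open>y \<in> L\<close>, \<open>x \<bullet> y = \<kappa>\<close>, would give a direction orthogonal to \<open>x\<close> that is positive on these
  \<open>y\<close> but negative on \<open>V\<close>; pushing \<open>x\<close> that way stays in \<open>L\<close> and leaves the hemisphere of \<open>V\<close>.\<close>

lemma support_antipode_bound:
  assumes k: "0 < \<kappa>" and x: "x \<in> L" and V: "V \<in> K" "V \<bullet> x = 0" and k0: "k0 \<in> L"
  shows "\<kappa> * (1 - k0 \<bullet> x) \<le> sqrt (1 - \<kappa>\<^sup>2) * (k0 \<bullet> V)"
proof (rule ccontr)
  define s where "s = sqrt (1 - \<kappa>\<^sup>2)"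
  define \<beta> where "\<beta> = \<kappa> * (1 - k0 \<bullet> x)"
  define C where "C = {v. \<beta> * norm v \<le> (s *\<^sub>R k0) \<bullet> v}"
  have xx: "x \<bullet> x = 1" using norm_L[OF x] by (simp add: norm_eq_1)
  have s: "0 < s" using k kappa_bounds by (simp add: s_def abs_square_less_1)
  have \<beta>: "0 \<le> \<beta>" using unit_inner_abs_le[OF norm_L[OF k0] norm_L[OF x]] k by (simp add: \<beta>_def abs_le_iff)
  assume "\<not> \<kappa> * (1 - k0 \<bullet> x) \<le> sqrt (1 - \<kappa>\<^sup>2) * (k0 \<bullet> V)"
  then have "V \<notin> C" using norm_K[OF V(1)] by (simp add: C_def \<beta>_def s_def)
  moreover have "convex C" unfolding C_def by (rule convex_norm_inner_cone[OF \<beta>])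
  moreover have "closed C" unfolding C_def by (intro closed_Collect_le continuous_intros)
  moreover have "l *\<^sub>R u \<in> C" if "u \<in> C" "0 \<le> l" for u l
    using that mult_left_mono[of "\<beta> * norm u" "(s *\<^sub>R k0) \<bullet> u" l] by (simp add: C_def algebra_simps)
  moreover have "0 \<in> C" by (simp add: C_def)
  ultimately obtain E where E: "E \<bullet> V < 0" "\<forall>u\<in>C. 0 \<le> E \<bullet> u"
    using separate_point_from_closed_convex_cone by metis
  define \<eta> where "\<eta> = - (E \<bullet> V) / 2"
  define E2 where "E2 = E - (E \<bullet> x) *\<^sub>R x + \<eta> *\<^sub>R (N - (N \<bullet> x) *\<^sub>R x)"
  have E2x: "E2 \<bullet> x = 0" by (simp add: E2_def inner_diff_left inner_add_left xx)
  have "N \<bullet> V \<le> 1" using unit_inner_abs_le[OF norm_N norm_K[OF V(1)]] by simp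
  then have "\<eta> * (N \<bullet> V) \<le> \<eta>" using E(1) by (simp add: \<eta>_def mult_left_le)
  then have E2V: "E2 \<bullet> V < 0"
    using E(1) V(2) by (simp add: E2_def \<eta>_def inner_diff_left inner_add_left inner_commute[of x V])
  have "0 < E2 \<bullet> y" if y: "y \<in> L" "x \<bullet> y = \<kappa>" for y
  proof -
    have "y - \<kappa> *\<^sub>R x \<in> C"
      using partner_residual(1)[OF k x y] partner_residual(3)[OF k x y k0] s mult_right_mono[of \<beta> _ s]
      by (simp add: C_def \<beta>_def s_def mult.commute)
    then have "0 \<le> E \<bullet> (y - \<kappa> *\<^sub>R x)" using E(2) by blast
    moreover have "E2 \<bullet> y = E \<bullet> (y - \<kappa> *\<^sub>R x) + \<eta> * (N \<bullet> (y - \<kappa> *\<^sub>R x))"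
      using y(2) by (simp add: E2_def inner_diff_left inner_add_left inner_diff_right algebra_simps)
    moreover have "0 < \<eta>" using E(1) by (simp add: \<eta>_def)
    ultimately show ?thesis using mult_pos_pos[OF _ partner_residual(2)[OF k x y], of \<eta>] by linarith
  qed
  then obtain t where t: "0 < t" "(x + t *\<^sub>R E2) /\<^sub>R norm (x + t *\<^sub>R E2) \<in> L"
    using perturbation_in_L[OF k x E2x] by blast
  then have "0 \<le> ((x + t *\<^sub>R E2) /\<^sub>R norm (x + t *\<^sub>R E2)) \<bullet> V"
    using inner_K_L_nonneg[OF V(1)] by blast
  then have "0 \<le> (x + t *\<^sub>R E2) \<bullet> V / norm (x + t *\<^sub>R E2)" by (simp only: inner_normalize_left)
  moreover have "(x + t *\<^sub>R E2) \<bullet> V < 0"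
    using V(2) t(1) E2V by (simp add: inner_add_left inner_commute[of x V] mult_pos_neg)
  ultimately show False by (simp add: zero_le_divide_iff)
qed

text \<open>The point at distance \<open>arccos \<kappa> = diam L\<close> from \<open>x \<in> L\<close> along the inner normal \<open>V\<close> of a
  hemisphere supporting \<open>L\<close> at \<open>x\<close> lies in \<open>L\<close>.\<close>

lemma antipode_in_L:
  assumes k: "0 < \<kappa>" and x: "x \<in> L" and V: "V \<in> K" "V \<bullet> x = 0"
  shows "\<kappa> *\<^sub>R x + sqrt (1 - \<kappa>\<^sup>2) *\<^sub>R V \<in> L"
proof (rule kappa_cap_subset_L[OF k])
  define s where "s = sqrt (1 - \<kappa>\<^sup>2)"
  have "s * s = 1 - \<kappa> * \<kappa>" using sqrt_one_minus_kappa_sq by (simp add: s_def)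
  then show "norm (\<kappa> *\<^sub>R x + s *\<^sub>R V) = 1"
    using norm_L[OF x] norm_K[OF V(1)] V(2)
    by (simp add: norm_eq_1 inner_add_left inner_add_right inner_commute[of x V])
  show "\<forall>y\<in>L. \<kappa> \<le> (\<kappa> *\<^sub>R x + s *\<^sub>R V) \<bullet> y"
    using support_antipode_bound[OF k x V] unfolding s_def[symmetric]
    by (simp add: inner_add_left inner_commute algebra_simps)
qed

text \<open>With \<open>z = a x - W\<close> as in \<open>nearest_point_decomposition\<close>, the antipode of \<open>x\<close> along \<open>W\<close>
  lies in \<open>L\<close>; being nonnegative on \<open>z\<close> forces \<open>norm W \<le> \<kappa>\<close>.\<close>

lemma inner_K_ge_neg_kappa_if_pos:
  assumes k: "0 < \<kappa>" and z: "z \<in> K" and Z: "Z \<in> K"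
  shows "- \<kappa> \<le> z \<bullet> Z"
proof (cases "z \<in> L")
  case True
  then show ?thesis using inner_K_L_nonneg[OF Z True] k by simp
next
  case False
  have "\<exists>k\<in>L. 0 \<le> z \<bullet> k" using inner_K_L_nonneg[OF z N_in_L] N_in_L by blast
  then obtain x W where x: "x \<in> L" and "\<forall>k\<in>L. z \<bullet> k \<le> z \<bullet> x" and a0: "0 \<le> z \<bullet> x"
    and zeq: "z = (z \<bullet> x) *\<^sub>R x - W" and W0: "W \<noteq> 0" and Wx: "W \<bullet> x = 0"
    and "\<forall>k\<in>L. 0 \<le> W \<bullet> k" and VK: "W /\<^sub>R norm W \<in> K"
    by (rule nearest_point_decomposition[OF norm_K[OF z] False])
  define a where "a = z \<bullet> x"
  define s where "s = sqrt (1 - \<kappa>\<^sup>2)"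
  have zeq': "z = a *\<^sub>R x - W" using zeq unfolding a_def .
  have xx: "x \<bullet> x = 1" using norm_L[OF x] by (simp add: norm_eq_1)
  have xW: "x \<bullet> W = 0" using Wx by (simp add: inner_commute)
  have "\<kappa> *\<^sub>R x + s *\<^sub>R (W /\<^sub>R norm W) \<in> L"
    unfolding s_def using antipode_in_L[OF k x VK] Wx by simp
  then have "0 \<le> (\<kappa> *\<^sub>R x + s *\<^sub>R (W /\<^sub>R norm W)) \<bullet> z"
    using inner_K_L_nonneg[OF z] by blast
  also have "\<dots> = a * \<kappa> - s * norm W"
    using xx xW W0 by (simp add: zeq' inner_add_left inner_diff_right inner_commute[of W x]
        dot_square_norm power2_eq_square)
  finally have sW: "s * norm W \<le> a * \<kappa>" by simp
  have "1 = z \<bullet> z" using norm_K[OF z] by (simp add: norm_eq_1)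
  also have "z \<bullet> z = a\<^sup>2 + W \<bullet> W"
    using xx xW by (simp add: zeq' inner_diff_left inner_diff_right inner_commute[of W x] power2_eq_square)
  finally have WW: "(norm W)\<^sup>2 = 1 - a\<^sup>2" by (simp add: power2_norm_eq_inner)
  have "(s * norm W)\<^sup>2 \<le> (a * \<kappa>)\<^sup>2"
    using sW k kappa_sq_le_1 by (intro power_mono) (auto simp: s_def)
  moreover have "(s * norm W)\<^sup>2 = (1 - \<kappa>\<^sup>2) * (1 - a\<^sup>2)"
    using WW kappa_sq_le_1 by (simp add: s_def power_mult_distrib)
  ultimately have "(1 - \<kappa>\<^sup>2) * (1 - a\<^sup>2) \<le> a\<^sup>2 * \<kappa>\<^sup>2" by (simp add: power_mult_distrib)
  moreover have "(1 - \<kappa>\<^sup>2) * (1 - a\<^sup>2) = 1 - a\<^sup>2 - \<kappa>\<^sup>2 + a\<^sup>2 * \<kappa>\<^sup>2"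
    by (simp add: algebra_simps)
  ultimately have "(norm W)\<^sup>2 \<le> \<kappa>\<^sup>2" using WW by linarith
  then have nW: "norm W \<le> \<kappa>" using power2_le_imp_le k by simp
  have "0 \<le> a * (x \<bullet> Z)" using inner_K_L_nonneg[OF Z x] a0 by (simp add: a_def)
  moreover have "W \<bullet> Z \<le> norm W" using norm_cauchy_schwarz[of W Z] norm_K[OF Z] by simp
  moreover have "z \<bullet> Z = a * (x \<bullet> Z) - W \<bullet> Z" by (simp add: zeq' inner_diff_left)
  ultimately show ?thesis using nW by linarith
qed

lemma inner_K_ge_neg_kappa:
  assumes "X \<in> K" "Z \<in> K"
  shows "- \<kappa> \<le> X \<bullet> Z"
proof -
  consider "\<kappa> < 0" | "\<kappa> = 0" | "0 < \<kappa>" by linarith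
  then show ?thesis
  proof cases
    case 1
    then show ?thesis using inner_K_ge_neg_kappa_if_neg assms by blast
  next
    case 2
    then have "Z \<in> L" using K_subset_L_if_kappa_0 assms(2) by blast
    then show ?thesis using inner_K_L_nonneg[OF assms(1)] \<open>\<kappa> = 0\<close> by simp
  next
    case 3
    then show ?thesis using inner_K_ge_neg_kappa_if_pos assms by blast
  qed
qed

lemma min_mutual_inner_K: "min_mutual_inner K = - \<kappa>"
proof (rule antisym)
  obtain X where X: "X \<in> bdK" using bdK_ne by blast
  then have XK: "X \<in> K" by (simp add: bdK_def)
  obtain Y where "Y \<in> K" "min_inner K X = X \<bullet> Y" using min_inner_attained[OF compact_K K_ne] by blast
  then show "min_mutual_inner K \<le> - \<kappa>"
    using min_mutual_inner_le[OF compact_K XK, of Y] min_inner_K_bdK_le[OF X] by simp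
  obtain P Q where "P \<in> K" "Q \<in> K" "min_mutual_inner K = P \<bullet> Q"
    using min_mutual_inner_attained[OF compact_K K_ne] by blast
  then show "- \<kappa> \<le> min_mutual_inner K" using inner_K_ge_neg_kappa by simp
qed

lemma min_inner_K_bdK:
  assumes "X \<in> bdK"
  shows "min_inner K X = - \<kappa>"
proof (rule antisym)
  show "min_inner K X \<le> - \<kappa>" by (rule min_inner_K_bdK_le[OF assms])
  obtain Y where "Y \<in> K" "min_inner K X = X \<bullet> Y" using min_inner_attained[OF compact_K K_ne] by blast
  then show "- \<kappa> \<le> min_inner K X" using inner_K_ge_neg_kappa assms by (simp add: bdK_def)
qed

end

section \<open>Widths and diameters on the sphere\<close>

lemma sph_polar_eq_spolar: "sph_polar W = spolar W"
  by (auto simp: sph_polar_def spolar_def hemi_def)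

lemma hemi_superset_iff_spolar:
  fixes A :: "('a::euclidean_space \<times> real) set"
  assumes "A \<subseteq> sphere 0 1"
  shows "Q \<in> sphere 0 1 \<and> A \<subseteq> hemi Q \<longleftrightarrow> Q \<in> spolar A"
  using assms by (auto simp: spolar_def hemi_def inner_commute)

lemma supporting_iff_spolar:
  fixes A :: "('a::euclidean_space \<times> real) set"
  assumes "closed A" "A \<subseteq> sphere 0 1"
  shows "supporting Q A \<longleftrightarrow> Q \<in> spolar A \<and> (\<exists>P\<in>A. Q \<bullet> P = 0)"
proof
  assume "supporting Q A"
  then obtain P where P: "Q \<in> sphere 0 1" "P \<in> sph_boundary A" "A \<subseteq> hemi Q" "Q \<bullet> P = 0"
    by (auto simp: supporting_def supports_at_def)
  have "P \<in> A" using P(2) assms(1) by (auto simp: sph_boundary_def)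
  then show "Q \<in> spolar A \<and> (\<exists>P\<in>A. Q \<bullet> P = 0)" using P hemi_superset_iff_spolar[OF assms(2)] by blast
next
  assume "Q \<in> spolar A \<and> (\<exists>P\<in>A. Q \<bullet> P = 0)"
  then obtain P where P: "P \<in> A" "Q \<bullet> P = 0" and QA: "Q \<in> spolar A" by blast
  have QS: "Q \<in> sphere 0 1" and hQ: "A \<subseteq> hemi Q"
    using hemi_superset_iff_spolar[OF assms(2), of Q] QA by auto
  have nP: "norm P = 1" using P(1) assms(2) by auto
  have "P \<in> closure (sphere 0 1 - A)"
  proof (rule closure_approachable[THEN iffD2], intro allI impI)
    fix e :: real assume e: "0 < e"
    define v where "v = P - (e / 4) *\<^sub>R Q"
    have vQ: "v \<bullet> Q = - e / 4"
      using P(2) QS by (simp add: v_def inner_diff_left inner_commute[of P Q] norm_eq_1)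
    then have v0: "v \<noteq> 0" using e by auto
    have "(v /\<^sub>R norm v) \<bullet> Q < 0"
      using vQ e v0 by (simp add: inner_normalize_left divide_neg_pos)
    then have "v /\<^sub>R norm v \<notin> A" using hQ by (auto simp: hemi_def inner_commute)
    moreover have "dist (v /\<^sub>R norm v) P < e"
      using dist_normalize_le[OF nP v0] QS e by (simp add: v_def)
    ultimately show "\<exists>y\<in>sphere 0 1 - A. dist y P < e" using v0 by force
  qed
  then have "P \<in> sph_boundary A" using P(1) closure_subset by (auto simp: sph_boundary_def)
  then show "supporting Q A" unfolding supporting_def supports_at_def using QS hQ P(2) by blast
qed

lemma width_eq_min_inner:
  fixes A :: "('a::euclidean_space \<times> real) set"
  assumes sA: "A \<subseteq> sphere 0 1" and P: "norm P = 1" and negP: "- P \<notin> spolar A"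
    and Q1: "Q1 \<in> spolar A" "Q1 \<noteq> P"
  shows "width P A = pi - arccos (min_inner (spolar A) P)"
proof -
  let ?B = "spolar A"
  obtain Q0 where Q0: "Q0 \<in> ?B" "min_inner ?B P = P \<bullet> Q0"
    using min_inner_attained[OF compact_spolar] Q1 by blast
  have le: "P \<bullet> Q0 \<le> P \<bullet> Q" if "Q \<in> ?B" for Q
    using min_inner_le[OF compact_spolar that, of P] Q0 by simp
  have range: "-1 \<le> P \<bullet> Q \<and> P \<bullet> Q \<le> 1" if "Q \<in> ?B" for Q
    using unit_inner_abs_le[OF P, of Q] that spolar_subset_sphere by (force simp: abs_le_iff)
  have "Q0 \<noteq> P"
  proof
    assume "Q0 = P"
    then have "1 \<le> P \<bullet> Q1" using le[OF Q1(1)] P by (simp add: norm_eq_1)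
    then show False
      using unit_inner_eq_1D[OF P, of Q1] range[OF Q1(1)] Q1 spolar_subset_sphere by force
  qed
  have "{Q \<in> sphere 0 1. Q \<noteq> P \<and> Q \<noteq> - P \<and> A \<subseteq> hemi Q} = ?B - {P}"
    using hemi_superset_iff_spolar[OF sA] negP by auto
  then have "width P A = (INF Q\<in>?B - {P}. pi - arccos (P \<bullet> Q))"
    unfolding width_def lune_thickness_def sph_dist_def by simp
  also have "\<dots> = pi - arccos (P \<bullet> Q0)"
  proof (rule cInf_eq_minimum)
    show "pi - arccos (P \<bullet> Q0) \<in> (\<lambda>Q. pi - arccos (P \<bullet> Q)) ` (?B - {P})"
      using Q0 \<open>Q0 \<noteq> P\<close> by blast
  next
    fix x assume "x \<in> (\<lambda>Q. pi - arccos (P \<bullet> Q)) ` (?B - {P})"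
    then obtain Q where Q: "Q \<in> ?B" "x = pi - arccos (P \<bullet> Q)" by blast
    then show "pi - arccos (P \<bullet> Q0) \<le> x"
      using arccos_le_arccos[of "P \<bullet> Q0" "P \<bullet> Q"] range[OF Q(1)] range[OF Q0(1)] le[OF Q(1)] by simp
  qed
  finally show ?thesis using Q0 by simp
qed

lemma sph_diam_eq_min_mutual_inner:
  fixes B :: "('a::euclidean_space \<times> real) set"
  assumes "compact B" "B \<noteq> {}" "B \<subseteq> sphere 0 1"
  shows "sph_diam B = arccos (min_mutual_inner B)"
proof -
  obtain P0 Q0 where PQ0: "P0 \<in> B" "Q0 \<in> B" "min_mutual_inner B = P0 \<bullet> Q0"
    using min_mutual_inner_attained[OF assms(1,2)] by blast
  have range: "-1 \<le> P \<bullet> Q \<and> P \<bullet> Q \<le> 1" if "P \<in> B" "Q \<in> B" for P Q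
    using unit_inner_abs_le[of P Q] that assms(3) by (force simp: abs_le_iff)
  show ?thesis unfolding sph_diam_def sph_dist_def
  proof (rule cSup_eq_maximum)
    show "arccos (min_mutual_inner B) \<in> (\<lambda>PQ. arccos (fst PQ \<bullet> snd PQ)) ` (B \<times> B)"
      using PQ0 by (intro image_eqI[of _ _ "(P0, Q0)"]) auto
  next
    fix x assume "x \<in> (\<lambda>PQ. arccos (fst PQ \<bullet> snd PQ)) ` (B \<times> B)"
    then obtain P Q where PQ: "P \<in> B" "Q \<in> B" "x = arccos (P \<bullet> Q)" by auto
    then show "x \<le> arccos (min_mutual_inner B)"
      using arccos_le_arccos[of "min_mutual_inner B" "P \<bullet> Q"] range[OF PQ(1,2)] range[OF PQ0(1,2)]
        min_mutual_inner_le[OF assms(1) PQ(1,2)] PQ0(3) by simp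
  qed
qed

lemma Delta_eqI:
  assumes "\<And>P. supporting P K \<Longrightarrow> width P K = w" and "supporting P0 K"
  shows "Delta K = w"
proof -
  have "\<forall>P. supporting P K \<longrightarrow> width P K = Delta K"
    unfolding Delta_def by (rule someI[of _ w]) (use assms(1) in blast)
  then show ?thesis using assms by metis
qed

locale sph_polar_body = polar_body K N for K :: "('a::euclidean_space \<times> real) set" and N
begin

lemma supporting_K_iff: "supporting P K \<longleftrightarrow> P \<in> bdL"
  using supporting_iff_spolar[OF compact_imp_closed[OF compact_K] K_subset_sphere] by (simp add: bdL_def)

lemma supporting_L_iff: "supporting X L \<longleftrightarrow> X \<in> bdK"
  using supporting_iff_spolar[OF compact_imp_closed[OF compact_spolar] spolar_subset_sphere, of X K]
    spolar_spolar_K by (simp add: bdK_def)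

lemma width_K:
  assumes "P \<in> bdL"
  shows "width P K = pi - arccos (min_inner L P)"
proof -
  have P: "P \<in> L" "N \<noteq> P" using assms N_notin_bdL unfolding bdL_def by blast+
  show ?thesis using width_eq_min_inner[OF K_subset_sphere norm_L[OF P(1)] uminus_notin_L[OF P(1)] N_in_L P(2)] .
qed

lemma width_L:
  assumes "X \<in> bdK"
  shows "width X L = pi - arccos (min_inner K X)"
proof -
  obtain P where X: "X \<in> K" and P: "P \<in> L" "X \<bullet> P = 0" using assms unfolding bdK_def by blast
  have "N \<noteq> X" using inner_N_L_pos[OF P(1)] P(2) by auto
  then show ?thesis
    using width_eq_min_inner[OF spolar_subset_sphere norm_K[OF X], of K N] uminus_notin_K[OF X] N_in_K
    by (simp add: spolar_spolar_K)
qed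

lemma constant_widthE:
  assumes "constant_width K"
  obtains \<kappa> where "constant_width_body K N \<kappa>"
proof -
  obtain w where w: "\<And>P. P \<in> bdL \<Longrightarrow> width P K = w"
    using assms supporting_K_iff by (auto simp: constant_width_def)
  obtain P0 where P0: "P0 \<in> bdL" using bdL_ne by blast
  have range: "\<bar>min_inner L P\<bar> \<le> 1" if "P \<in> bdL" for P
    using min_inner_abs_le_1[OF compact_spolar L_ne spolar_subset_sphere] norm_L that by (simp add: bdL_def)
  have "min_inner L P = min_inner L P0" if "P \<in> bdL" for P
  proof -
    have "arccos (min_inner L P) = arccos (min_inner L P0)"
      using w[OF that] w[OF P0] width_K[OF that] width_K[OF P0] by simp
    then show ?thesis using arccos_eq_iff range[OF that] range[OF P0] by blast
  qed
  then have "constant_width_body K N (min_inner L P0)"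
    by (intro constant_width_body.intro polar_body_axioms constant_width_body_axioms.intro)
  then show ?thesis by (rule that)
qed

end

locale sph_constant_width_body = sph_polar_body K N + constant_width_body K N \<kappa>
  for K :: "('a::euclidean_space \<times> real) set" and N \<kappa>
begin

lemma Delta_K: "Delta K = pi - arccos \<kappa>"
proof -
  obtain P0 where "P0 \<in> bdL" using bdL_ne by blast
  then show ?thesis using width_K min_inner_L_bdL supporting_K_iff by (intro Delta_eqI) auto
qed

lemma Delta_L: "Delta L = arccos \<kappa>"
proof -
  obtain X0 where "X0 \<in> bdK" using bdK_ne by blast
  then show ?thesis
    using width_L min_inner_K_bdK supporting_L_iff arccos_minus kappa_bounds by (intro Delta_eqI) auto
qed

lemma sph_diam_K: "sph_diam K = pi - arccos \<kappa>"
  using sph_diam_eq_min_mutual_inner[OF compact_K K_ne K_subset_sphere] min_mutual_inner_K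
    arccos_minus kappa_bounds by simp

lemma sph_diam_L: "sph_diam L = arccos \<kappa>"
  using sph_diam_eq_min_mutual_inner[OF compact_spolar L_ne spolar_subset_sphere] min_mutual_inner_L
  by simp

end

section \<open>The spherical Wulff shape\<close>

definition wulff_cone :: "('a::euclidean_space \<Rightarrow> real) \<Rightarrow> ('a \<times> real) set" where
  "wulff_cone \<gamma> = {Z. \<forall>\<theta>\<in>sphere 0 1. fst Z \<bullet> \<theta> \<le> \<gamma> \<theta> * snd Z}"

lemma convex_wulff_cone: "convex (wulff_cone \<gamma>)"
proof (rule convexI)
  fix u v :: "'a \<times> real" and s t :: real
  assume "u \<in> wulff_cone \<gamma>" "v \<in> wulff_cone \<gamma>" and st: "0 \<le> s" "0 \<le> t" "s + t = 1"
  then have "s * (fst u \<bullet> \<theta>) + t * (fst v \<bullet> \<theta>) \<le> s * (\<gamma> \<theta> * snd u) + t * (\<gamma> \<theta> * snd v)"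
    if "\<theta> \<in> sphere 0 1" for \<theta>
    using that by (intro add_mono mult_left_mono) (auto simp: wulff_cone_def)
  then show "s *\<^sub>R u + t *\<^sub>R v \<in> wulff_cone \<gamma>"
    by (simp add: wulff_cone_def inner_add_left algebra_simps)
qed

lemma closed_wulff_cone: "closed (wulff_cone \<gamma>)"
proof -
  have "wulff_cone \<gamma> = (\<Inter>\<theta>\<in>sphere 0 1. {Z. fst Z \<bullet> \<theta> \<le> \<gamma> \<theta> * snd Z})"
    by (auto simp: wulff_cone_def)
  then show ?thesis by (auto intro!: closed_INT closed_Collect_le continuous_intros)
qed

lemma scaleR_wulff_cone: "x \<in> wulff_cone \<gamma> \<Longrightarrow> 0 \<le> l \<Longrightarrow> l *\<^sub>R x \<in> wulff_cone \<gamma>"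
  using mult_left_mono by (fastforce simp: wulff_cone_def algebra_simps)

lemma wulff_cone_snd_pos:
  assumes gpos: "\<And>\<theta>. \<theta> \<in> sphere 0 1 \<Longrightarrow> 0 < \<gamma> \<theta>" and Z: "Z \<in> wulff_cone \<gamma>" "norm Z = 1"
  shows "0 < snd Z"
proof -
  obtain \<theta> where th: "\<theta> \<in> sphere (0::'a) 1" "fst Z \<bullet> \<theta> = norm (fst Z)"
  proof (cases "fst Z = 0")
    case True
    obtain b :: 'a where "b \<in> Basis" using nonempty_Basis by blast
    then show ?thesis using that[of b] True by simp
  next
    case False
    then show ?thesis
      using that[of "fst Z /\<^sub>R norm (fst Z)"] by (simp add: dot_square_norm power2_eq_square)
  qed
  moreover have "fst Z \<bullet> \<theta> \<le> \<gamma> \<theta> * snd Z" using Z(1) th(1) unfolding wulff_cone_def by blast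
  ultimately have le: "norm (fst Z) \<le> \<gamma> \<theta> * snd Z" by simp
  then have "0 \<le> \<gamma> \<theta> * snd Z" using norm_ge_zero[of "fst Z"] by linarith
  then have "0 \<le> snd Z" using gpos[OF th(1)] by (simp add: zero_le_mult_iff)
  moreover have "snd Z \<noteq> 0"
  proof
    assume "snd Z = 0"
    then have "Z = 0" using le by (simp add: prod_eq_iff)
    then show False using Z(2) by simp
  qed
  ultimately show ?thesis by simp
qed

lemma sph_wulff_eq_wulff_cone:
  assumes gpos: "\<And>\<theta>. \<theta> \<in> sphere 0 1 \<Longrightarrow> 0 < \<gamma> \<theta>"
  shows "sph_wulff \<gamma> = wulff_cone \<gamma> \<inter> sphere 0 1"
proof -
  have "alphaN Z \<in> Id_emb ` wulff \<gamma> \<longleftrightarrow> Z \<in> wulff_cone \<gamma>" if "0 < snd Z" for Z :: "'a \<times> real"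
  proof -
    have "alphaN Z \<in> Id_emb ` wulff \<gamma> \<longleftrightarrow> (1 / snd Z) *\<^sub>R fst Z \<in> wulff \<gamma>"
      by (auto simp: alphaN_def Id_emb_def)
    also have "\<dots> \<longleftrightarrow> (\<forall>\<theta>\<in>sphere 0 1. (fst Z \<bullet> \<theta>) / snd Z \<le> \<gamma> \<theta>)"
      by (simp add: wulff_def)
    also have "\<dots> \<longleftrightarrow> Z \<in> wulff_cone \<gamma>"
      using that by (simp add: wulff_cone_def divide_le_eq mult.commute)
    finally show ?thesis .
  qed
  moreover have "0 < snd Z" if "Z \<in> wulff_cone \<gamma>" "Z \<in> sphere 0 1" for Z
    using wulff_cone_snd_pos[OF gpos that(1)] that(2) by simp
  ultimately show ?thesis unfolding sph_wulff_def upper_hemi_def by blast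
qed

lemma wulff_cone_nhd:
  assumes cont: "continuous_on (sphere 0 1) \<gamma>" and gpos: "\<And>\<theta>. \<theta> \<in> sphere 0 1 \<Longrightarrow> 0 < \<gamma> \<theta>"
  obtains e where "0 < e" "\<And>Z. dist Z (0, 1) < e \<Longrightarrow> Z \<in> wulff_cone \<gamma>"
proof -
  obtain b :: 'a where "b \<in> Basis" using nonempty_Basis by blast
  then have "sphere (0::'a) 1 \<noteq> {}" by force
  then obtain \<theta>0 where \<theta>0: "\<theta>0 \<in> sphere (0::'a) 1" "\<forall>\<theta>\<in>sphere 0 1. \<gamma> \<theta>0 \<le> \<gamma> \<theta>"
    using continuous_attains_inf[OF compact_sphere _ cont] by blast
  define e where "e = min (1/2) (\<gamma> \<theta>0 / 2)"
  have "Z \<in> wulff_cone \<gamma>" if d: "dist Z (0, 1) < e" for Z :: "'a \<times> real"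
  proof -
    have "e \<le> 1/2" "e \<le> \<gamma> \<theta>0 / 2" by (simp_all add: e_def)
    moreover have "dist (fst Z) 0 < e" "\<bar>snd Z - 1\<bar> < e"
      using d dist_fst_le[of Z "(0, 1)"] dist_snd_le[of Z "(0, 1)"] by (auto simp: dist_real_def)
    ultimately have f: "norm (fst Z) < \<gamma> \<theta>0 / 2" and s: "1/2 \<le> snd Z"
      by (auto simp: abs_less_iff)
    have "fst Z \<bullet> \<theta> \<le> \<gamma> \<theta> * snd Z" if th: "\<theta> \<in> sphere 0 1" for \<theta>
    proof -
      have "fst Z \<bullet> \<theta> \<le> norm (fst Z)" using norm_cauchy_schwarz[of "fst Z" \<theta>] th by simp
      also have "\<dots> \<le> \<gamma> \<theta> / 2" using f \<theta>0(2) th by fastforce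
      also have "\<dots> \<le> \<gamma> \<theta> * snd Z" using s gpos[OF th] by simp
      finally show ?thesis .
    qed
    then show ?thesis by (simp add: wulff_cone_def)
  qed
  moreover have "0 < e" using gpos[OF \<theta>0(1)] by (simp add: e_def)
  ultimately show ?thesis using that by blast
qed

lemma sph_polar_body_sph_wulff:
  fixes \<gamma> :: "'a::euclidean_space \<Rightarrow> real"
  assumes cont: "continuous_on (sphere 0 1) \<gamma>" and gpos: "\<And>\<theta>. \<theta> \<in> sphere 0 1 \<Longrightarrow> 0 < \<gamma> \<theta>"
  shows "sph_polar_body (sph_wulff \<gamma>) (0, 1)"
proof unfold_locales
  have K: "sph_wulff \<gamma> = wulff_cone \<gamma> \<inter> sphere 0 1" by (rule sph_wulff_eq_wulff_cone[OF gpos])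
  show "2 \<le> DIM('a \<times> real)" using DIM_positive[where 'a='a] by simp
  show "norm (0::'a, 1::real) = 1" by simp
  show "sph_wulff \<gamma> \<subseteq> sphere 0 1" "compact (sph_wulff \<gamma>)"
    unfolding K by (auto intro: closed_Int_compact closed_wulff_cone)
  show "0 < (0, 1) \<bullet> Z" if "Z \<in> sph_wulff \<gamma>" for Z
  proof -
    have "Z \<in> wulff_cone \<gamma>" "norm Z = 1" using that K by auto
    then have "0 < snd Z" using wulff_cone_snd_pos[of \<gamma> Z] gpos by blast
    then show ?thesis by (cases Z) simp
  qed
  obtain e where "0 < e" "\<And>Z. dist Z (0, 1) < e \<Longrightarrow> Z \<in> wulff_cone \<gamma>"
    using wulff_cone_nhd[OF cont gpos] by blast
  then show "\<exists>e>0. \<forall>Z\<in>sphere 0 1. dist Z (0, 1) < e \<longrightarrow> Z \<in> sph_wulff \<gamma>"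
    unfolding K by blast
  show "spolar (spolar (sph_wulff \<gamma>)) = sph_wulff \<gamma>"
    unfolding K
    by (rule spolar_spolar_cone[OF convex_wulff_cone closed_wulff_cone _ scaleR_wulff_cone])
      (simp add: wulff_cone_def)
qed

theorem mainTheorem5:
  fixes \<gamma> :: "'a::euclidean_space \<Rightarrow> real"
  assumes "continuous_on (sphere 0 1) \<gamma>"
    and "\<And>\<theta>. \<theta> \<in> sphere 0 1 \<Longrightarrow> \<gamma> \<theta> > 0"
    and "constant_width (sph_wulff \<gamma>)"
  shows "Delta (sph_wulff \<gamma>) + sph_diam (sph_polar (sph_wulff \<gamma>)) = pi \<and>
         Delta (sph_wulff \<gamma>) + Delta (sph_polar (sph_wulff \<gamma>)) = pi \<and>
         sph_diam (sph_wulff \<gamma>) + Delta (sph_polar (sph_wulff \<gamma>)) = pi \<and>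
         sph_diam (sph_wulff \<gamma>) + sph_diam (sph_polar (sph_wulff \<gamma>)) = pi"
proof -
  interpret sph_polar_body "sph_wulff \<gamma>" "(0, 1)"
    using sph_polar_body_sph_wulff assms(1,2) by blast
  obtain \<kappa> where "constant_width_body (sph_wulff \<gamma>) (0, 1) \<kappa>"
    using constant_widthE[OF assms(3)] by blast
  then interpret sph_constant_width_body "sph_wulff \<gamma>" "(0, 1)" \<kappa>
    by (simp add: sph_constant_width_body_def sph_polar_body_axioms)
  show ?thesis
    using Delta_K Delta_L sph_diam_K sph_diam_L by (simp add: sph_polar_eq_spolar)
qed

end
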